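(* Consider any economy $\mathcal{E}$ (as in the context) such that either (1) in every state, all firms have the same ranking of workers (firms have possibly state-specific assortative preferences), or (2) $\mathcal{E}$ satisfies the SPC*. Then, considering Bayesian Nash equilibria in which firms report truthfully, $\mathcal{E}$ has a unique BNE outcome, namely the one that yields in each state $\theta$ the unique stable matching (for the true preferences) of $\mathcal{M}(\theta)$.
   Context: Matching market: $\mathcal{M}=(F,W,U)$ with finite firms $F=\{f_i\}_{i\in[m]}$, finite workers $W=\{w_j\}_{j\in[n]}$, utilities $u^f_{ij}$ of firm $f_i$ from worker $w_j$ and $u^w_{ij}$ of worker $w_j$ from firm $f_i$; unmatched utility is $0$; all preferences strict; all pairs mutually acceptable (all match utilities $>0$). An economy is $\mathcal{E}=(F,W,\{U(\theta)\}_{\theta\in\Theta},\Theta,\Psi)$ with finite $\Theta$, full-support prior $\Psi$, market $\mathcal{M}(\theta)=(F,W,U(\theta))$ in state $\theta$; workers' utilities are state-independent, firms' may depend on $\theta$. Standing assumption: each $\mathcal{M}(\theta)$ has a unique stable matching. Game: $\theta$ drawn by $\Psi$; firms observe $\theta$; each worker knows only his own preferences; all simultaneously submit rank-ordered lists of acceptable partners; firm-proposing Deferred Acceptance is run on the reports. Firms report truthfully; a worker's strategy is one rank-ordered list; a BNE is a profile where each worker's list maximizes his expected utility under $\Psi$. The outcome of a BNE is the matching produced in each state. Sub-market of $(F,W,U)$: $(F',W',U')$ with $F'\subseteq F$, $W'\subseteq W$, $U'$ the restriction of $U$. $(f,w)$ is a top-top match of a sub-market if $w$ is $f$'s favorite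 worker in it and $f$ is $w$'s favorite firm in it. A market satisfies the Sequential Preference Condition (SPC) if there are orderings $f_1,\dots,f_m$ of the firms and $w_1,\dots,w_n$ of the workers such that for each $i\le\min(m,n)$, $(f_i,w_i)$ is a top-top match of the sub-market induced by $\{f_j,w_j\}_{j\ge i}$; $(f_i,w_i)$ and its agents are said to have order $i$. An economy satisfies the SPC if each $\mathcal{M}(\theta)$ does, with possibly state-specific orderings $f_{1|\theta},\dots,f_{m|\theta}$ and $w_{1|\theta},\dots,w_{n|\theta}$. An economy satisfies the SPC* if it satisfies the SPC and for every state $\theta$, every $i\le\min(m,n)$ and every firm $f$: if $w_{i|\theta}$ strictly prefers $f$ to $f_{i|\theta}$, then for every state $\theta'$ there is $i'<i$ (possibly depending on $\theta'$) with $f=f_{i'|\theta'}$. *)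

theory Defs
  imports Complex_Main
begin

text \<open>A matching between firms F and workers W is represented as a partial function
  from workers to firms (None = unmatched), injective on matched workers.\<close>

definition is_matching :: "'f set \<Rightarrow> 'w set \<Rightarrow> ('w \<Rightarrow> 'f option) \<Rightarrow> bool" where
  "is_matching F W \<mu> \<longleftrightarrow>
     (\<forall>w f. \<mu> w = Some f \<longrightarrow> w \<in> W \<and> f \<in> F) \<and>
     (\<forall>w1 w2 f. \<mu> w1 = Some f \<longrightarrow> \<mu> w2 = Some f \<longrightarrow> w1 = w2)"

definition wutil :: "('w \<Rightarrow> 'f \<Rightarrow> real) \<Rightarrow> 'w \<Rightarrow> 'f option \<Rightarrow> real" where
  "wutil uw w p = (case p of None \<Rightarrow> 0 | Some f \<Rightarrow> uw w f)"

definition futil :: "('f \<Rightarrow> 'w \<Rightarrow> real) \<Rightarrow> ('w \<Rightarrow> 'f option) \<Rightarrow> 'f \<Rightarrow> real" where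
  "futil uf \<mu> f = (if \<exists>w. \<mu> w = Some f then uf f (THE w. \<mu> w = Some f) else 0)"

definition stable_matching ::
  "'f set \<Rightarrow> 'w set \<Rightarrow> ('f \<Rightarrow> 'w \<Rightarrow> real) \<Rightarrow> ('w \<Rightarrow> 'f \<Rightarrow> real) \<Rightarrow> ('w \<Rightarrow> 'f option) \<Rightarrow> bool" where
  "stable_matching F W uf uw \<mu> \<longleftrightarrow>
     is_matching F W \<mu> \<and>
     (\<forall>w f. \<mu> w = Some f \<longrightarrow> uf f w \<ge> 0 \<and> uw w f \<ge> 0) \<and>
     (\<forall>f\<in>F. \<forall>w\<in>W. \<mu> w \<noteq> Some f \<longrightarrow>
        \<not> (uw w f > wutil uw w (\<mu> w) \<and> uf f w > futil uf \<mu> f))"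

definition rank_list :: "('a \<Rightarrow> real) \<Rightarrow> 'a set \<Rightarrow> 'a list" where
  "rank_list u S = (THE L. distinct L \<and> set L = S \<and> sorted_wrt (\<lambda>a b. u a > u b) L)"

definition valid_list :: "'f set \<Rightarrow> 'f list \<Rightarrow> bool" where
  "valid_list F L \<longleftrightarrow> distinct L \<and> set L \<subseteq> F"

text \<open>Simultaneous-round firm-proposing DA. The state is the set Rej of pairs (f,w)
  such that w has rejected f. Each firm proposes to the first worker in its list
  that has not rejected it; each worker holds the proposer ranked highest in her list
  (proposers not on her list are unacceptable) and rejects all other proposers.\<close>

definition da_target :: "('f \<Rightarrow> 'w list) \<Rightarrow> ('f \<times> 'w) set \<Rightarrow> 'f \<Rightarrow> 'w option" where
  "da_target pf Rej f = find (\<lambda>w. (f, w) \<notin> Rej) (pf f)"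

definition da_held ::
  "'f set \<Rightarrow> ('f \<Rightarrow> 'w list) \<Rightarrow> ('w \<Rightarrow> 'f list) \<Rightarrow> ('f \<times> 'w) set \<Rightarrow> 'w \<Rightarrow> 'f option" where
  "da_held F pf pw Rej w = find (\<lambda>f. f \<in> F \<and> da_target pf Rej f = Some w) (pw w)"

definition da_step ::
  "'f set \<Rightarrow> ('f \<Rightarrow> 'w list) \<Rightarrow> ('w \<Rightarrow> 'f list) \<Rightarrow> ('f \<times> 'w) set \<Rightarrow> ('f \<times> 'w) set" where
  "da_step F pf pw Rej =
     Rej \<union> {(f, w). f \<in> F \<and> da_target pf Rej f = Some w \<and> da_held F pf pw Rej w \<noteq> Some f}"

text \<open>Each non-final round adds a new rejected pair in F x W, so card F * card W + 1
  rounds suffice to reach the fixed point; the outcome matches each worker to the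
  firm she holds at the end.\<close>
definition DA ::
  "'f set \<Rightarrow> 'w set \<Rightarrow> ('f \<Rightarrow> 'w list) \<Rightarrow> ('w \<Rightarrow> 'f list) \<Rightarrow> 'w \<Rightarrow> 'f option" where
  "DA F W pf pw =
     (let R = (da_step F pf pw ^^ (card F * card W + 1)) {}
      in (\<lambda>w. if w \<in> W then da_held F pf pw R w else None))"

definition game_outcome ::
  "'f set \<Rightarrow> 'w set \<Rightarrow> ('s \<Rightarrow> 'f \<Rightarrow> 'w \<Rightarrow> real) \<Rightarrow> 's \<Rightarrow> ('w \<Rightarrow> 'f list) \<Rightarrow> 'w \<Rightarrow> 'f option" where
  "game_outcome F W uf \<theta> \<sigma> = DA F W (\<lambda>f. rank_list (uf \<theta> f) W) \<sigma>"

definition expected_utility ::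
  "'f set \<Rightarrow> 'w set \<Rightarrow> ('s \<Rightarrow> 'f \<Rightarrow> 'w \<Rightarrow> real) \<Rightarrow> ('w \<Rightarrow> 'f \<Rightarrow> real) \<Rightarrow> 's set \<Rightarrow> ('s \<Rightarrow> real)
     \<Rightarrow> ('w \<Rightarrow> 'f list) \<Rightarrow> 'w \<Rightarrow> real" where
  "expected_utility F W uf uw \<Theta> \<Psi> \<sigma> w =
     (\<Sum>\<theta>\<in>\<Theta>. \<Psi> \<theta> * wutil uw w (game_outcome F W uf \<theta> \<sigma> w))"

definition is_BNE ::
  "'f set \<Rightarrow> 'w set \<Rightarrow> ('s \<Rightarrow> 'f \<Rightarrow> 'w \<Rightarrow> real) \<Rightarrow> ('w \<Rightarrow> 'f \<Rightarrow> real) \<Rightarrow> 's set \<Rightarrow> ('s \<Rightarrow> real)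
     \<Rightarrow> ('w \<Rightarrow> 'f list) \<Rightarrow> bool" where
  "is_BNE F W uf uw \<Theta> \<Psi> \<sigma> \<longleftrightarrow>
     (\<forall>w\<in>W. valid_list F (\<sigma> w)) \<and>
     (\<forall>w\<in>W. \<forall>L. valid_list F L \<longrightarrow>
        expected_utility F W uf uw \<Theta> \<Psi> (\<sigma>(w := L)) w \<le> expected_utility F W uf uw \<Theta> \<Psi> \<sigma> w)"

definition assortative_firms :: "'f set \<Rightarrow> 'w set \<Rightarrow> ('s \<Rightarrow> 'f \<Rightarrow> 'w \<Rightarrow> real) \<Rightarrow> 's set \<Rightarrow> bool" where
  "assortative_firms F W uf \<Theta> \<longleftrightarrow>
     (\<forall>\<theta>\<in>\<Theta>. \<forall>f1\<in>F. \<forall>f2\<in>F. \<forall>w1\<in>W. \<forall>w2\<in>W.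
        uf \<theta> f1 w1 > uf \<theta> f1 w2 \<longleftrightarrow> uf \<theta> f2 w1 > uf \<theta> f2 w2)"

definition top_top ::
  "('f \<Rightarrow> 'w \<Rightarrow> real) \<Rightarrow> ('w \<Rightarrow> 'f \<Rightarrow> real) \<Rightarrow> 'f set \<Rightarrow> 'w set \<Rightarrow> 'f \<Rightarrow> 'w \<Rightarrow> bool" where
  "top_top uf uw F' W' f w \<longleftrightarrow>
     f \<in> F' \<and> w \<in> W' \<and>
     (\<forall>w'\<in>W'. w' \<noteq> w \<longrightarrow> uf f w' < uf f w) \<and>
     (\<forall>f'\<in>F'. f' \<noteq> f \<longrightarrow> uw w f' < uw w f)"

text \<open>Orderings f_1..f_m (ordF 1 .. ordF m) and w_1..w_n witnessing the SPC of a market.\<close>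
definition SPC_orderings ::
  "'f set \<Rightarrow> 'w set \<Rightarrow> ('f \<Rightarrow> 'w \<Rightarrow> real) \<Rightarrow> ('w \<Rightarrow> 'f \<Rightarrow> real) \<Rightarrow> (nat \<Rightarrow> 'f) \<Rightarrow> (nat \<Rightarrow> 'w) \<Rightarrow> bool" where
  "SPC_orderings F W uf uw ordF ordW \<longleftrightarrow>
     bij_betw ordF {1..card F} F \<and> bij_betw ordW {1..card W} W \<and>
     (\<forall>i\<in>{1..min (card F) (card W)}.
        top_top uf uw (ordF ` {i..card F}) (ordW ` {i..card W}) (ordF i) (ordW i))"

definition SPC_star ::
  "'f set \<Rightarrow> 'w set \<Rightarrow> ('s \<Rightarrow> 'f \<Rightarrow> 'w \<Rightarrow> real) \<Rightarrow> ('w \<Rightarrow> 'f \<Rightarrow> real) \<Rightarrow> 's set \<Rightarrow> bool" where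
  "SPC_star F W uf uw \<Theta> \<longleftrightarrow>
     (\<exists>ordF :: 's \<Rightarrow> nat \<Rightarrow> 'f. \<exists>ordW :: 's \<Rightarrow> nat \<Rightarrow> 'w.
        (\<forall>\<theta>\<in>\<Theta>. SPC_orderings F W (uf \<theta>) uw (ordF \<theta>) (ordW \<theta>)) \<and>
        (\<forall>\<theta>\<in>\<Theta>. \<forall>i\<in>{1..min (card F) (card W)}. \<forall>f\<in>F.
           uw (ordW \<theta> i) f > uw (ordW \<theta> i) (ordF \<theta> i) \<longrightarrow>
           (\<forall>\<theta>'\<in>\<Theta>. \<exists>i'\<in>{1..<i}. f = ordF \<theta>' i')))"

end

(*
  Truthful reporting is an equilibrium. Under the SPC a worker cannot affect the matching of the
  pairs of lower order than hers, and reporting truthfully she gets her pair partner, the best firm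
  those pairs leave. With assortative firms, DA is a serial dictatorship in the firms' common order
  of the workers: a worker receives the first firm on her list not taken by a higher-ranked worker,
  and her true ranking selects the best of these.

  Uniqueness. With assortative firms, full support of the prior means that in equilibrium no
  worker gains from truth-telling in any state, and a blocking pair would yield such a gain, so
  every equilibrium outcome is stable. Under SPC*, induction on the order i shows that in every
  state all pairs of order below i are matched. If the pair (f, w) of order i were unmatched in
  some state, w could move the firms she prefers to f, followed by f, to the top of her list. By
  SPC* these firms have order below i in every state, so they end with workers they prefer to w
  and never propose to her; hence the deviation changes nothing unless f proposes to w, in which
  case w gets f or better, and where w has lower order she keeps her pair partner. The deviation is
  thus weakly better in every state and strictly better in the state where f, ending with a worker
  it likes less than w, must have proposed to her.
*)
theory Submission
  imports Defs
begin

definition index :: "'a list \<Rightarrow> 'a \<Rightarrow> nat" where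
  "index xs a = length (takeWhile (\<lambda>x. x \<noteq> a) xs)"

lemma index_Cons: "index (x # xs) a = (if x = a then 0 else Suc (index xs a))"
  by (simp add: index_def)

lemma index_append: "index (xs @ ys) a = (if a \<in> set xs then index xs a else length xs + index ys a)"
  by (induction xs) (auto simp: index_Cons index_def)

lemma index_less_length: "a \<in> set xs \<Longrightarrow> index xs a < length xs"
  by (induction xs) (auto simp: index_Cons)

lemma nth_index: "a \<in> set xs \<Longrightarrow> xs ! index xs a = a"
  by (induction xs) (auto simp: index_Cons)

lemma index_nth_le: "i < length xs \<Longrightarrow> index xs (xs ! i) \<le> i"
  by (induction xs arbitrary: i) (auto simp: index_Cons nth_Cons split: nat.split)

lemma index_eq_iff: "a \<in> set xs \<Longrightarrow> b \<in> set xs \<Longrightarrow> index xs a = index xs b \<longleftrightarrow> a = b"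
  by (metis nth_index)

lemma find_Some_iff_index:
  "find P xs = Some x \<longleftrightarrow> x \<in> set xs \<and> P x \<and> (\<forall>y\<in>set xs. P y \<longrightarrow> index xs x \<le> index xs y)"
    (is "_ \<longleftrightarrow> ?least x")
proof -
  have least: "?least x" if "find P xs = Some x" for x
  proof -
    obtain i where i: "i < length xs" "P (xs ! i)" "x = xs ! i" "\<forall>j<i. \<not> P (xs ! j)"
      using \<open>find P xs = Some x\<close> by (auto simp: find_Some_iff)
    have "index xs x \<le> index xs y" if "y \<in> set xs" "P y" for y
    proof -
      have "\<not> index xs y < i"
        using i(4) nth_index[OF that(1)] that(2) by metis
      then show ?thesis
        using index_nth_le[OF i(1)] i(3) by simp
    qed
    then show ?thesis
      using i by auto
  qed
  moreover have "find P xs = Some x" if "?least x"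
  proof -
    from that obtain z where z: "find P xs = Some z"
      by (cases "find P xs") (auto simp: find_None_iff)
    from least[OF z] that have "index xs z = index xs x"
      by (simp add: le_antisym)
    with least[OF z] that have "z = x"
      by (simp add: index_eq_iff)
    with z show ?thesis by simp
  qed
  ultimately show ?thesis by blast
qed

lemma find_filter_weaken: "(\<And>x. P x \<Longrightarrow> Q x) \<Longrightarrow> find P (filter Q xs) = find P xs"
  by (induction xs) auto

lemma find_append_skip: "\<forall>y\<in>set xs. \<not> P y \<Longrightarrow> find P (xs @ ys) = find P ys"
  by (induction xs) auto

lemma rank_list_spec:
  fixes u :: "'a \<Rightarrow> real"
  assumes "finite S" "inj_on u S"
  shows "distinct (rank_list u S) \<and> set (rank_list u S) = S \<and> sorted_wrt (\<lambda>a b. u a > u b) (rank_list u S)"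
proof -
  let ?ranks = "\<lambda>L. distinct L \<and> set L = S \<and> sorted_wrt (\<lambda>a b. u a > u b) L"
  have strict: "sorted_wrt (<) (map (\<lambda>x. - u x) L) \<longleftrightarrow> sorted_wrt (\<lambda>a b. u a > u b) L" for L
    by (simp add: sorted_wrt_map)
  obtain xs where xs: "set xs = S" "distinct xs"
    using finite_distinct_list[OF assms(1)] by blast
  define L where "L = sort_key (\<lambda>x. - u x) xs"
  have "distinct (map (\<lambda>x. - u x) L)"
    using xs assms(2) by (simp add: L_def distinct_map inj_on_def)
  then have "?ranks L"
    using xs strict[of L] by (simp add: L_def strict_sorted_iff)
  moreover have "L1 = L2" if "?ranks L1" "?ranks L2" for L1 L2
  proof -
    have "map (\<lambda>x. - u x) L1 = map (\<lambda>x. - u x) L2"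
      using that strict[of L1] strict[of L2]
      by (intro sorted_distinct_set_unique) (auto simp: strict_sorted_iff)
    then show ?thesis
      using that assms(2) by (simp add: inj_on_map_eq_map inj_on_def)
  qed
  ultimately have "\<exists>!L. ?ranks L"
    by blast
  then show ?thesis
    unfolding rank_list_def by (rule theI')
qed

lemma
  assumes "finite S" "inj_on u S"
  shows distinct_rank_list: "distinct (rank_list u S)"
    and set_rank_list: "set (rank_list u S) = S"
  using rank_list_spec[OF assms] by auto

lemma index_rank_list_less_iff:
  assumes "finite S" "inj_on u S" "a \<in> S" "b \<in> S"
  shows "index (rank_list u S) a < index (rank_list u S) b \<longleftrightarrow> u a > u b"
proof -
  let ?L = "rank_list u S"
  have L: "set ?L = S" "sorted_wrt (\<lambda>a b. u a > u b) ?L"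
    using rank_list_spec[OF assms(1,2)] by auto
  have gt: "u x > u y" if "x \<in> S" "y \<in> S" "index ?L x < index ?L y" for x y
    using L that index_less_length nth_index unfolding sorted_wrt_iff_nth_less by metis
  have "index ?L a < index ?L b" if "u a > u b"
  proof -
    have "index ?L a \<noteq> index ?L b"
      using that L(1) assms(3,4) index_eq_iff by fastforce
    moreover have "\<not> index ?L b < index ?L a"
      using gt[OF assms(4,3)] that by linarith
    ultimately show ?thesis by linarith
  qed
  then show ?thesis
    using gt[OF assms(3,4)] by blast
qed

section \<open>Deferred acceptance\<close>

definition da_rounds :: "'f set \<Rightarrow> ('f \<Rightarrow> 'w list) \<Rightarrow> ('w \<Rightarrow> 'f list) \<Rightarrow> nat \<Rightarrow> ('f \<times> 'w) set" where
  "da_rounds F pf pw k = (da_step F pf pw ^^ k) {}"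

abbreviation da_final :: "'f set \<Rightarrow> 'w set \<Rightarrow> ('f \<Rightarrow> 'w list) \<Rightarrow> ('w \<Rightarrow> 'f list) \<Rightarrow> ('f \<times> 'w) set" where
  "da_final F W pf pw \<equiv> da_rounds F pf pw (card F * card W + 1)"

lemma da_rounds_0 [simp]: "da_rounds F pf pw 0 = {}"
  by (simp add: da_rounds_def)

lemma da_rounds_Suc: "da_rounds F pf pw (Suc k) = da_step F pf pw (da_rounds F pf pw k)"
  by (simp add: da_rounds_def)

lemma DA_eq: "DA F W pf pw w = (if w \<in> W then da_held F pf pw (da_final F W pf pw) w else None)"
  by (simp add: DA_def da_rounds_def)

lemma mem_da_step_iff:
  "(f, w) \<in> da_step F pf pw R \<longleftrightarrow>
     (f, w) \<in> R \<or> (f \<in> F \<and> da_target pf R f = Some w \<and> da_held F pf pw R w \<noteq> Some f)"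
  by (simp add: da_step_def)

lemma da_step_increasing: "R \<subseteq> da_step F pf pw R"
  by (auto simp: da_step_def)

lemma da_rounds_mono: "k \<le> k' \<Longrightarrow> da_rounds F pf pw k \<subseteq> da_rounds F pf pw k'"
proof (induction rule: dec_induct)
  case (step n)
  then show ?case
    using da_step_increasing[of "da_rounds F pf pw n" F pf pw] by (simp add: da_rounds_Suc)
qed simp

lemma da_target_Some_iff:
  "da_target pf R f = Some w \<longleftrightarrow>
     w \<in> set (pf f) \<and> (f, w) \<notin> R \<and> (\<forall>w'\<in>set (pf f). index (pf f) w' < index (pf f) w \<longrightarrow> (f, w') \<in> R)"
  unfolding da_target_def find_Some_iff_index by (meson not_le)

lemma da_target_None_iff: "da_target pf R f = None \<longleftrightarrow> (\<forall>w\<in>set (pf f). (f, w) \<in> R)"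
  by (auto simp: da_target_def find_None_iff)

lemma da_held_Some_iff:
  "da_held F pf pw R w = Some f \<longleftrightarrow>
     f \<in> set (pw w) \<and> f \<in> F \<and> da_target pf R f = Some w \<and>
     (\<forall>g\<in>set (pw w). g \<in> F \<and> da_target pf R g = Some w \<longrightarrow> index (pw w) f \<le> index (pw w) g)"
  by (simp add: da_held_def find_Some_iff_index)

lemma da_held_exists:
  assumes "g \<in> set (pw w)" "g \<in> F" "da_target pf R g = Some w"
  obtains h where "da_held F pf pw R w = Some h" "index (pw w) h \<le> index (pw w) g"
proof (cases "da_held F pf pw R w")
  case None
  then show ?thesis
    using assms by (auto simp: da_held_def find_None_iff)
next
  case (Some h)
  then show ?thesis
    using that assms by (auto simp: da_held_Some_iff)
qed

text \<open>A held proposal is never rejected, so a worker's held firm only improves.\<close>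
lemma da_held_step:
  assumes "da_held F pf pw R w = Some g"
  obtains g' where "da_held F pf pw (da_step F pf pw R) w = Some g'" "index (pw w) g' \<le> index (pw w) g"
proof -
  have g: "g \<in> set (pw w)" "g \<in> F" "da_target pf R g = Some w"
    using assms by (auto simp: da_held_Some_iff)
  then have "(g, w) \<notin> da_step F pf pw R"
    using assms by (auto simp: mem_da_step_iff da_target_Some_iff)
  with g(3) have "da_target pf (da_step F pf pw R) g = Some w"
    using da_step_increasing[of R F pf pw] by (auto simp: da_target_Some_iff)
  with g show ?thesis
    using that da_held_exists by metis
qed

lemma da_held_rounds_mono:
  assumes "da_held F pf pw (da_rounds F pf pw k) w = Some g" "k \<le> k'"
  obtains g' where "da_held F pf pw (da_rounds F pf pw k') w = Some g'" "index (pw w) g' \<le> index (pw w) g"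
proof -
  have "\<exists>g'. da_held F pf pw (da_rounds F pf pw k') w = Some g' \<and> index (pw w) g' \<le> index (pw w) g"
    using assms(2)
  proof (induction rule: dec_induct)
    case base
    then show ?case using assms(1) by blast
  next
    case (step n)
    then obtain g' where g': "da_held F pf pw (da_rounds F pf pw n) w = Some g'" "index (pw w) g' \<le> index (pw w) g"
      by blast
    obtain g'' where "da_held F pf pw (da_rounds F pf pw (Suc n)) w = Some g''" "index (pw w) g'' \<le> index (pw w) g'"
      using da_held_step[OF g'(1)] by (auto simp: da_rounds_Suc)
    with g'(2) show ?case
      by auto
  qed
  then show ?thesis
    using that by blast
qed

lemma da_target_index_mono:
  assumes "R \<subseteq> R'" "da_target pf R f = Some a" "da_target pf R' f = Some b"
  shows "index (pf f) a \<le> index (pf f) b"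
  using assms unfolding da_target_Some_iff by (meson not_le subsetD)

lemma da_rejection_proposed:
  assumes "(f, w) \<in> da_rounds F pf pw k"
  obtains k' where "k' < k" "da_target pf (da_rounds F pf pw k') f = Some w"
proof -
  have "\<exists>k'<k. da_target pf (da_rounds F pf pw k') f = Some w"
    using assms
  proof (induction k)
    case (Suc k)
    then show ?case
      by (auto simp: da_rounds_Suc mem_da_step_iff less_Suc_eq)
  qed simp
  then show ?thesis
    using that by blast
qed

lemma da_rounds_subset:
  assumes "\<forall>f\<in>F. set (pf f) \<subseteq> W"
  shows "da_rounds F pf pw k \<subseteq> F \<times> W"
proof (induction k)
  case (Suc k)
  then show ?case
    using assms by (auto simp: da_rounds_Suc da_step_def da_target_Some_iff)
qed simp

lemma da_rounds_stay_fixed: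
  assumes "da_step F pf pw (da_rounds F pf pw k) = da_rounds F pf pw k" "k \<le> k'"
  shows "da_rounds F pf pw k' = da_rounds F pf pw k"
  using assms(2) by (induction rule: dec_induct) (simp_all add: da_rounds_Suc assms(1))

text \<open>Before the fixed point every round rejects a new pair of F \<times> W, so card F * card W + 1
  rounds suffice.\<close>
lemma da_final_fixpoint:
  assumes "finite F" "finite W" "\<forall>f\<in>F. set (pf f) \<subseteq> W"
  shows "da_step F pf pw (da_final F W pf pw) = da_final F W pf pw"
proof (rule ccontr)
  let ?M = "card F * card W + 1"
  let ?R = "da_rounds F pf pw"
  assume moving: "da_step F pf pw (?R ?M) \<noteq> ?R ?M"
  have fin: "finite (?R k)" for k
    using finite_subset[OF da_rounds_subset[OF assms(3)]] assms(1,2) by blast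
  have "k \<le> card (?R k)" if "k \<le> ?M" for k
    using that
  proof (induction k)
    case (Suc k)
    have "da_step F pf pw (?R k) \<noteq> ?R k"
    proof
      assume "da_step F pf pw (?R k) = ?R k"
      moreover from this have "?R ?M = ?R k"
        using da_rounds_stay_fixed[of F pf pw k ?M] Suc.prems by simp
      ultimately show False
        using moving by simp
    qed
    then have "?R k \<subset> ?R (Suc k)"
      using da_step_increasing[of "?R k" F pf pw] by (auto simp: da_rounds_Suc)
    then have "card (?R k) < card (?R (Suc k))"
      by (rule psubset_card_mono[OF fin])
    with Suc show ?case
      by simp
  qed simp
  then have "?M \<le> card (?R ?M)"
    by simp
  moreover have "card (?R ?M) \<le> card F * card W"
    using card_mono[OF _ da_rounds_subset[OF assms(3)]] assms(1,2) by (simp add: card_cartesian_product)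
  ultimately show False
    by linarith
qed

lemma fixpoint_target_held:
  assumes "da_step F pf pw R = R" "f \<in> F" "da_target pf R f = Some w"
  shows "da_held F pf pw R w = Some f"
proof (rule ccontr)
  assume "da_held F pf pw R w \<noteq> Some f"
  then have "(f, w) \<in> da_step F pf pw R"
    using assms(2,3) by (simp add: mem_da_step_iff)
  then show False
    using assms(1,3) by (simp add: da_target_Some_iff)
qed

lemma da_rejection_held_better:
  assumes "(f, w) \<in> da_rounds F pf pw k" "f \<in> set (pw w)"
  obtains g where "da_held F pf pw (da_rounds F pf pw k) w = Some g" "index (pw w) g < index (pw w) f"
proof -
  have "\<exists>g. da_held F pf pw (da_rounds F pf pw k) w = Some g \<and> index (pw w) g < index (pw w) f"
    using assms(1)
  proof (induction k)
    case (Suc k)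
    let ?R = "da_rounds F pf pw k"
    have "\<exists>g. da_held F pf pw ?R w = Some g \<and> index (pw w) g < index (pw w) f"
    proof (cases "(f, w) \<in> ?R")
      case False
      then have new: "f \<in> F" "da_target pf ?R f = Some w" "da_held F pf pw ?R w \<noteq> Some f"
        using Suc.prems by (auto simp: da_rounds_Suc mem_da_step_iff)
      then obtain h where h: "da_held F pf pw ?R w = Some h" "index (pw w) h \<le> index (pw w) f"
        using da_held_exists assms(2) by metis
      have "h \<in> set (pw w)"
        using h(1) by (simp add: da_held_Some_iff)
      moreover have "h \<noteq> f"
        using new(3) h(1) by auto
      ultimately have "index (pw w) h \<noteq> index (pw w) f"
        using index_eq_iff assms(2) by metis
      with h show ?thesis by auto
    qed (use Suc.IH in blast)
    then obtain g where g: "da_held F pf pw ?R w = Some g" "index (pw w) g < index (pw w) f"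
      by blast
    obtain g' where "da_held F pf pw (da_rounds F pf pw (Suc k)) w = Some g'" "index (pw w) g' \<le> index (pw w) g"
      using da_held_step[OF g(1)] by (auto simp: da_rounds_Suc)
    with g(2) show ?case
      by auto
  qed simp
  then show ?thesis
    using that by blast
qed

lemma DA_is_matching: "is_matching F W (DA F W pf pw)"
proof -
  have "w \<in> W \<and> f \<in> F \<and> da_target pf (da_final F W pf pw) f = Some w" if "DA F W pf pw w = Some f" for w f
    using that by (auto simp: DA_eq da_held_Some_iff split: if_splits)
  then show ?thesis
    unfolding is_matching_def by (metis option.inject)
qed

lemma is_matchingD: "is_matching F W \<mu> \<Longrightarrow> \<mu> w = Some f \<Longrightarrow> w \<in> W \<and> f \<in> F"
  by (simp add: is_matching_def)

lemma futil_Some: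
  assumes "is_matching F W \<mu>" "\<mu> w = Some f"
  shows "futil uf \<mu> f = uf f w"
proof -
  have "(THE w. \<mu> w = Some f) = w"
    using assms unfolding is_matching_def by blast
  then show ?thesis
    using assms(2) by (auto simp: futil_def)
qed

lemma futil_None: "\<forall>w. \<mu> w \<noteq> Some f \<Longrightarrow> futil uf \<mu> f = 0"
  by (simp add: futil_def)

lemma futil_less:
  assumes "is_matching F W \<mu>" "uf f w > 0" "\<And>u. \<mu> u = Some f \<Longrightarrow> uf f u < uf f w"
  shows "futil uf \<mu> f < uf f w"
  using assms futil_Some[OF assms(1)] futil_None by metis

lemma futil_nonneg:
  assumes "is_matching F W \<mu>" "\<forall>w\<in>W. uf f w \<ge> 0"
  shows "futil uf \<mu> f \<ge> 0"
proof (cases "\<exists>w. \<mu> w = Some f")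
  case True
  then obtain w where "\<mu> w = Some f"
    by blast
  with assms show ?thesis
    using futil_Some[OF assms(1)] by (force simp: is_matching_def)
qed (simp add: futil_None)

lemma wutil_nonneg:
  assumes "is_matching F W \<mu>" "\<forall>f\<in>F. uw w f > 0"
  shows "wutil uw w (\<mu> w) \<ge> 0"
  using assms by (cases "\<mu> w") (auto simp: wutil_def is_matching_def less_imp_le)

text \<open>Stability for the true firm utilities and the workers' reported lists (a firm missing from a
  list is unacceptable); this is what DA achieves whatever the workers report.\<close>
definition list_stable ::
  "'f set \<Rightarrow> 'w set \<Rightarrow> ('f \<Rightarrow> 'w \<Rightarrow> real) \<Rightarrow> ('w \<Rightarrow> 'f list) \<Rightarrow> ('w \<Rightarrow> 'f option) \<Rightarrow> bool" where
  "list_stable F W uf pw \<mu> \<longleftrightarrow> is_matching F W \<mu> \<and> (\<forall>w f. \<mu> w = Some f \<longrightarrow> f \<in> set (pw w)) \<and>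
    (\<forall>f\<in>F. \<forall>w\<in>W. \<mu> w \<noteq> Some f \<longrightarrow> f \<in> set (pw w) \<longrightarrow>
       (\<forall>g. \<mu> w = Some g \<longrightarrow> index (pw w) f < index (pw w) g) \<longrightarrow> \<not> uf f w > futil uf \<mu> f)"

lemma list_stable_no_blocking:
  assumes "list_stable F W uf pw \<mu>" "f \<in> F" "w \<in> W" "f \<in> set (pw w)" "\<mu> w \<noteq> Some f"
    "\<And>g. \<mu> w = Some g \<Longrightarrow> index (pw w) f < index (pw w) g"
  shows "uf f w \<le> futil uf \<mu> f"
  using assms unfolding list_stable_def by force

locale firm_side =
  fixes F :: "'f set" and W :: "'w set" and uf :: "'f \<Rightarrow> 'w \<Rightarrow> real"
  assumes finite_F: "finite F" and finite_W: "finite W"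
    and uf_inj: "f \<in> F \<Longrightarrow> inj_on (uf f) W"
    and uf_pos: "f \<in> F \<Longrightarrow> w \<in> W \<Longrightarrow> uf f w > 0"
begin

abbreviation firm_lists :: "'f \<Rightarrow> 'w list" where
  "firm_lists \<equiv> \<lambda>f. rank_list (uf f) W"

lemma set_firm_lists: "f \<in> F \<Longrightarrow> set (firm_lists f) = W"
  by (simp add: set_rank_list finite_W uf_inj)

lemma firm_lists_index_less_iff:
  "f \<in> F \<Longrightarrow> a \<in> W \<Longrightarrow> b \<in> W \<Longrightarrow> index (firm_lists f) a < index (firm_lists f) b \<longleftrightarrow> uf f a > uf f b"
  by (simp add: index_rank_list_less_iff finite_W uf_inj)

lemma final_fixpoint: "da_step F firm_lists pw (da_final F W firm_lists pw) = da_final F W firm_lists pw"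
  by (rule da_final_fixpoint[OF finite_F finite_W]) (simp add: set_firm_lists)

lemma DA_final_rejected:
  assumes "f \<in> F" "w \<in> W" "futil uf (DA F W firm_lists pw) f < uf f w"
  shows "(f, w) \<in> da_final F W firm_lists pw"
proof (cases "da_target firm_lists (da_final F W firm_lists pw) f")
  case None
  then show ?thesis
    using assms(1,2) set_firm_lists by (simp add: da_target_None_iff)
next
  case (Some t)
  then have t: "t \<in> W" "DA F W firm_lists pw t = Some f"
    using fixpoint_target_held[OF final_fixpoint assms(1)] set_firm_lists assms(1)
    by (auto simp: DA_eq da_target_Some_iff)
  then have "uf f w > uf f t"
    using assms(3) futil_Some[OF DA_is_matching] by metis
  then have "index (firm_lists f) w < index (firm_lists f) t"
    using firm_lists_index_less_iff assms(1,2) t(1) by blast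
  then show ?thesis
    using Some assms(1,2) set_firm_lists by (simp add: da_target_Some_iff)
qed

theorem DA_list_stable: "list_stable F W uf pw (DA F W firm_lists pw)"
proof -
  let ?\<mu> = "DA F W firm_lists pw"
  have "\<not> uf f w > futil uf ?\<mu> f"
    if f: "f \<in> F" "f \<in> set (pw w)" and w: "w \<in> W"
      and above: "\<forall>g. ?\<mu> w = Some g \<longrightarrow> index (pw w) f < index (pw w) g" for f w
  proof
    assume "uf f w > futil uf ?\<mu> f"
    then have "(f, w) \<in> da_final F W firm_lists pw"
      using DA_final_rejected f(1) w by simp
    then obtain g where "da_held F firm_lists pw (da_final F W firm_lists pw) w = Some g"
        "index (pw w) g < index (pw w) f"
      using da_rejection_held_better f(2) by metis
    then show False
      using above w by (auto simp: DA_eq)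
  qed
  moreover have "f \<in> set (pw w)" if "?\<mu> w = Some f" for w f
    using that by (auto simp: DA_eq da_held_Some_iff split: if_splits)
  ultimately show ?thesis
    unfolding list_stable_def using DA_is_matching by (simp add: not_less)
qed

text \<open>The first rejection of a pair of a list-stable matching would be by a worker holding a firm
  that forms a blocking pair with her.\<close>
lemma da_rejected_not_list_stable_pair:
  assumes \<nu>: "list_stable F W uf pw \<nu>"
  shows "(f, w) \<in> da_rounds F firm_lists pw k \<Longrightarrow> \<nu> w \<noteq> Some f"
proof (induction k arbitrary: f w)
  case (Suc k)
  let ?R = "da_rounds F firm_lists pw k"
  show ?case
  proof
    assume \<nu>w: "\<nu> w = Some f"
    with Suc have new: "f \<in> F" "da_target firm_lists ?R f = Some w" "da_held F firm_lists pw ?R w \<noteq> Some f"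
      by (auto simp: da_rounds_Suc mem_da_step_iff)
    have m: "is_matching F W \<nu>" and f: "f \<in> set (pw w)" and w: "w \<in> W"
      using \<nu> \<nu>w by (auto simp: list_stable_def is_matching_def)
    obtain g where g: "da_held F firm_lists pw ?R w = Some g" "index (pw w) g \<le> index (pw w) f"
      using da_held_exists[where pw = pw and w = w, OF f new(1,2)] .
    have g': "g \<in> F" "g \<in> set (pw w)" "da_target firm_lists ?R g = Some w" "g \<noteq> f"
      using g(1) new(3) by (auto simp: da_held_Some_iff)
    have "uf g u < uf g w" if "\<nu> u = Some g" for u
    proof -
      have "u \<in> W" "u \<noteq> w"
        using that m \<nu>w g'(4) by (auto simp: is_matching_def)
      moreover have "(g, u) \<notin> ?R"
        using Suc.IH that by blast
      ultimately have "\<not> index (firm_lists g) u < index (firm_lists g) w"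
        using g'(1,3) set_firm_lists by (auto simp: da_target_Some_iff)
      moreover have "index (firm_lists g) u \<noteq> index (firm_lists g) w"
        using index_eq_iff set_firm_lists g'(1) w \<open>u \<in> W\<close> \<open>u \<noteq> w\<close> by metis
      ultimately show ?thesis
        using firm_lists_index_less_iff g'(1) w \<open>u \<in> W\<close> by (meson linorder_neqE_nat)
    qed
    then have "futil uf \<nu> g < uf g w"
      using futil_less[OF m] uf_pos g'(1) w by blast
    moreover have "index (pw w) g \<noteq> index (pw w) f"
      using g'(2,4) f index_eq_iff by metis
    with g(2) have "index (pw w) g < index (pw w) f"
      by simp
    ultimately show False
      using list_stable_no_blocking[OF \<nu> g'(1) w g'(2)] \<nu>w g'(4) by auto
  qed
qed simp

theorem DA_firm_optimal:
  assumes \<nu>: "list_stable F W uf pw \<nu>" and f: "f \<in> F"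
  shows "futil uf \<nu> f \<le> futil uf (DA F W firm_lists pw) f"
proof (cases "\<exists>u. \<nu> u = Some f")
  case True
  then obtain u where u: "\<nu> u = Some f" "u \<in> W"
    using \<nu> by (auto simp: list_stable_def is_matching_def)
  then have "\<not> futil uf (DA F W firm_lists pw) f < uf f u"
    using DA_final_rejected da_rejected_not_list_stable_pair[OF \<nu>] f by blast
  moreover have "futil uf \<nu> f = uf f u"
    using futil_Some u(1) \<nu> by (auto simp: list_stable_def)
  ultimately show ?thesis
    by simp
next
  case False
  then have "futil uf \<nu> f = 0"
    by (simp add: futil_None)
  moreover have "futil uf (DA F W firm_lists pw) f \<ge> 0"
    using uf_pos[OF f] by (intro futil_nonneg[OF DA_is_matching]) (simp add: less_imp_le)
  ultimately show ?thesis
    by simp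
qed

text \<open>A firm proposes down its list, so it never proposed to a worker it likes less than its
  final partner.\<close>
lemma DA_no_proposal_below_partner:
  assumes "DA F W firm_lists pw u = Some y" "w \<in> W" "uf y w < uf y u" "k \<le> card F * card W + 1"
  shows "da_target firm_lists (da_rounds F firm_lists pw k) y \<noteq> Some w"
proof
  assume early: "da_target firm_lists (da_rounds F firm_lists pw k) y = Some w"
  have "u \<in> W" "y \<in> F" and final: "da_target firm_lists (da_final F W firm_lists pw) y = Some u"
    using assms(1) by (auto simp: DA_eq da_held_Some_iff split: if_splits)
  have "index (firm_lists y) w \<le> index (firm_lists y) u"
    using da_target_index_mono[OF da_rounds_mono[OF assms(4)] early final] .
  then show False
    using firm_lists_index_less_iff[OF \<open>y \<in> F\<close> \<open>u \<in> W\<close> assms(2)] assms(3) by simp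
qed

end

definition dev_list :: "'f list \<Rightarrow> 'f \<Rightarrow> 'f list \<Rightarrow> 'f list" where
  "dev_list TB f L = TB @ [f] @ filter (\<lambda>h. h \<notin> set TB \<and> h \<noteq> f) L"

lemma set_dev_list: "set (dev_list TB f L) = set TB \<union> {f} \<union> set L"
  by (auto simp: dev_list_def)

lemma index_dev_list_head: "f \<notin> set TB \<Longrightarrow> index (dev_list TB f L) f = length TB"
  by (simp add: dev_list_def index_append index_Cons)

lemma index_dev_list_le_head:
  assumes "index (dev_list TB f L) h \<le> length TB"
  shows "h \<in> set TB \<or> h = f"
  using assms by (auto simp: dev_list_def index_append index_Cons split: if_splits)

lemma da_held_dev_eq:
  assumes "\<forall>y\<in>insert f (set TB). da_target pf R y \<noteq> Some w"
  shows "da_held F pf (pw(w := dev_list TB f (pw w))) R = da_held F pf pw R"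
proof
  fix u
  let ?P = "\<lambda>h. h \<in> F \<and> da_target pf R h = Some w"
  have "find ?P (dev_list TB f (pw w)) = find ?P (filter (\<lambda>h. h \<notin> set TB \<and> h \<noteq> f) (pw w))"
    unfolding dev_list_def using assms by (subst append_assoc[symmetric], subst find_append_skip) auto
  also have "\<dots> = find ?P (pw w)"
    using assms by (intro find_filter_weaken) auto
  finally show "da_held F pf (pw(w := dev_list TB f (pw w))) R u = da_held F pf pw R u"
    by (simp add: da_held_def)
qed

lemma da_rounds_dev_eq:
  assumes "\<forall>j<k. \<forall>y\<in>insert f (set TB). da_target pf (da_rounds F pf pw j) y \<noteq> Some w"
  shows "da_rounds F pf (pw(w := dev_list TB f (pw w))) k = da_rounds F pf pw k"
  using assms
proof (induction k)
  case (Suc k)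
  have "da_rounds F pf (pw(w := dev_list TB f (pw w))) k = da_rounds F pf pw k"
    using Suc.prems by (intro Suc.IH) simp
  moreover have "da_held F pf (pw(w := dev_list TB f (pw w))) (da_rounds F pf pw k) = da_held F pf pw (da_rounds F pf pw k)"
    using Suc.prems by (intro da_held_dev_eq) simp
  ultimately show ?case
    by (simp only: da_rounds_Suc da_step_def)
qed simp

lemma DA_dev_unchanged:
  assumes "\<forall>k\<le>card F * card W + 1. \<forall>y\<in>insert f (set TB). da_target pf (da_rounds F pf pw k) y \<noteq> Some w"
  shows "DA F W pf (pw(w := dev_list TB f (pw w))) = DA F W pf pw"
proof -
  have "da_rounds F pf (pw(w := dev_list TB f (pw w))) (card F * card W + 1) = da_final F W pf pw"
    using assms by (intro da_rounds_dev_eq) simp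
  moreover have "da_held F pf (pw(w := dev_list TB f (pw w))) (da_final F W pf pw) = da_held F pf pw (da_final F W pf pw)"
    using assms by (intro da_held_dev_eq) simp
  ultimately show ?thesis
    by (intro ext) (simp only: DA_eq)
qed

text \<open>Up to the first proposal of f to w the two runs coincide; from then on w holds f
  or a firm she listed before f.\<close>
lemma DA_dev_gets_head:
  assumes f: "f \<in> F" "f \<notin> set TB" and w: "w \<in> W"
    and TB_silent: "\<forall>k\<le>card F * card W + 1. \<forall>y\<in>set TB. da_target pf (da_rounds F pf pw k) y \<noteq> Some w"
    and proposes: "k \<le> card F * card W + 1" "da_target pf (da_rounds F pf pw k) f = Some w"
  obtains h where "DA F W pf (pw(w := dev_list TB f (pw w))) w = Some h" "h \<in> set TB \<or> h = f"
proof -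
  let ?L = "dev_list TB f (pw w)"
  let ?pw' = "pw(w := ?L)"
  let ?P = "\<lambda>k. da_target pf (da_rounds F pf pw k) f = Some w"
  define k0 where "k0 = (LEAST k. ?P k)"
  have k0: "?P k0" "k0 \<le> k"
    using proposes(2) unfolding k0_def by (rule LeastI, rule Least_le)
  have "da_rounds F pf ?pw' k0 = da_rounds F pf pw k0"
    using TB_silent k0(2) proposes(1) not_less_Least[of _ ?P] unfolding k0_def[symmetric]
    by (intro da_rounds_dev_eq) auto
  with k0(1) have "da_target pf (da_rounds F pf ?pw' k0) f = Some w"
    by simp
  moreover have "f \<in> set (?pw' w)"
    by (simp add: set_dev_list)
  ultimately obtain h where h: "da_held F pf ?pw' (da_rounds F pf ?pw' k0) w = Some h" "index ?L h \<le> index ?L f"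
    using da_held_exists[where pw = ?pw' and w = w] f(1) by (metis fun_upd_same)
  obtain h' where h': "da_held F pf ?pw' (da_final F W pf ?pw') w = Some h'" "index ?L h' \<le> index ?L h"
    using da_held_rounds_mono[OF h(1), of "card F * card W + 1"] k0(2) proposes(1) by auto
  then have "h' \<in> set TB \<or> h' = f"
    using h(2) index_dev_list_head[OF f(2)] by (intro index_dev_list_le_head[where L = "pw w"]) simp
  with h' w show ?thesis
    using that by (simp add: DA_eq)
qed

lemma index_dev_list_less_head:
  assumes "f \<notin> set TB" "g \<in> set TB \<or> g = f" "index (dev_list TB f L) y < index (dev_list TB f L) g"
  shows "y \<in> set TB \<and> (g \<in> set TB \<longrightarrow> index TB y < index TB g)"
proof -
  have "index (dev_list TB f L) g = (if g \<in> set TB then index TB g else length TB)"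
    using assms(1,2) by (auto simp: dev_list_def index_append index_Cons)
  moreover have "index TB g < length TB" if "g \<in> set TB"
    using that by (rule index_less_length)
  ultimately have "index (dev_list TB f L) y < length TB"
    using assms(3) by (auto split: if_splits)
  then show ?thesis
    using assms(3) by (auto simp: dev_list_def index_append split: if_splits)
qed

section \<open>Markets satisfying the SPC\<close>

locale market = firm_side F W uf
  for F :: "'f set" and W :: "'w set" and uf :: "'f \<Rightarrow> 'w \<Rightarrow> real" +
  fixes uw :: "'w \<Rightarrow> 'f \<Rightarrow> real"
  assumes uw_inj: "w \<in> W \<Longrightarrow> inj_on (uw w) F"
    and uw_pos: "w \<in> W \<Longrightarrow> f \<in> F \<Longrightarrow> uw w f > 0"
begin

abbreviation worker_lists :: "'w \<Rightarrow> 'f list" where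
  "worker_lists \<equiv> \<lambda>w. rank_list (uw w) F"

lemma set_worker_lists: "w \<in> W \<Longrightarrow> set (worker_lists w) = F"
  by (simp add: set_rank_list finite_F uw_inj)

lemma worker_lists_index_less_iff:
  "w \<in> W \<Longrightarrow> a \<in> F \<Longrightarrow> b \<in> F \<Longrightarrow> index (worker_lists w) a < index (worker_lists w) b \<longleftrightarrow> uw w a > uw w b"
  by (simp add: index_rank_list_less_iff finite_F uw_inj)

lemma wutil_matching_nonneg: "is_matching F W \<mu> \<Longrightarrow> w \<in> W \<Longrightarrow> wutil uw w (\<mu> w) \<ge> 0"
  using uw_pos by (intro wutil_nonneg) auto

lemma stable_imp_list_stable:
  assumes st: "stable_matching F W uf uw \<nu>"
  shows "list_stable F W uf worker_lists \<nu>"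
proof -
  have m: "is_matching F W \<nu>"
    using st by (simp add: stable_matching_def)
  have "\<not> uf f w > futil uf \<nu> f"
    if f: "f \<in> F" and w: "w \<in> W" and "\<nu> w \<noteq> Some f"
      and above: "\<forall>g. \<nu> w = Some g \<longrightarrow> index (worker_lists w) f < index (worker_lists w) g" for f w
  proof -
    have "uw w f > wutil uw w (\<nu> w)"
    proof (cases "\<nu> w")
      case None
      then show ?thesis
        using uw_pos f w by (simp add: wutil_def)
    next
      case (Some g)
      then have "g \<in> F"
        using m by (auto simp: is_matching_def)
      with Some show ?thesis
        using above worker_lists_index_less_iff f w by (simp add: wutil_def)
    qed
    then show ?thesis
      using st f w \<open>\<nu> w \<noteq> Some f\<close> unfolding stable_matching_def by blast
  qed
  moreover have "f \<in> set (worker_lists w)" if "\<nu> w = Some f" for w f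
    using that m set_worker_lists by (auto simp: is_matching_def)
  ultimately show ?thesis
    unfolding list_stable_def using m by blast
qed

end

definition pairs_matched_below ::
  "'f set \<Rightarrow> 'w set \<Rightarrow> (nat \<Rightarrow> 'f) \<Rightarrow> (nat \<Rightarrow> 'w) \<Rightarrow> nat \<Rightarrow> ('w \<Rightarrow> 'f option) \<Rightarrow> bool" where
  "pairs_matched_below F W ordF ordW r \<mu> \<longleftrightarrow>
     (\<forall>j\<in>{1..<r}. j \<le> min (card F) (card W) \<longrightarrow> \<mu> (ordW j) = Some (ordF j))"

text \<open>Under the SPC the truthful list of the worker of order j has this property, and it is all
  that list-stability needs to force the pair of order j to be matched.\<close>
definition order_respecting :: "(nat \<Rightarrow> 'f) \<Rightarrow> nat \<Rightarrow> 'f list \<Rightarrow> bool" where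
  "order_respecting ordF j L \<longleftrightarrow>
     ordF j \<in> set L \<and> (\<forall>h\<in>set L. index L h < index L (ordF j) \<longrightarrow> h \<in> ordF ` {1..<j})"

locale spc_market = market F W uf uw
  for F :: "'f set" and W :: "'w set" and uf :: "'f \<Rightarrow> 'w \<Rightarrow> real" and uw :: "'w \<Rightarrow> 'f \<Rightarrow> real" +
  fixes ordF :: "nat \<Rightarrow> 'f" and ordW :: "nat \<Rightarrow> 'w"
  assumes spc: "SPC_orderings F W uf uw ordF ordW"
begin

abbreviation K :: nat where
  "K \<equiv> min (card F) (card W)"

abbreviation matched_below :: "nat \<Rightarrow> ('w \<Rightarrow> 'f option) \<Rightarrow> bool" where
  "matched_below \<equiv> pairs_matched_below F W ordF ordW"

lemma ordF_in: "i \<in> {1..card F} \<Longrightarrow> ordF i \<in> F"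
  using spc by (auto simp: SPC_orderings_def bij_betw_def)

lemma ordW_in: "i \<in> {1..card W} \<Longrightarrow> ordW i \<in> W"
  using spc by (auto simp: SPC_orderings_def bij_betw_def)

lemma ordF_eq_iff: "i \<in> {1..card F} \<Longrightarrow> j \<in> {1..card F} \<Longrightarrow> ordF i = ordF j \<longleftrightarrow> i = j"
  using spc unfolding SPC_orderings_def bij_betw_def inj_on_def by blast

lemma ordW_eq_iff: "i \<in> {1..card W} \<Longrightarrow> j \<in> {1..card W} \<Longrightarrow> ordW i = ordW j \<longleftrightarrow> i = j"
  using spc unfolding SPC_orderings_def bij_betw_def inj_on_def by blast

lemma firm_order:
  assumes "f \<in> F"
  obtains i where "i \<in> {1..card F}" "ordF i = f"
proof -
  have "f \<in> ordF ` {1..card F}"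
    using assms spc by (simp add: SPC_orderings_def bij_betw_def)
  with that show ?thesis
    by blast
qed

lemma worker_order:
  assumes "w \<in> W"
  obtains i where "i \<in> {1..card W}" "ordW i = w"
proof -
  have "w \<in> ordW ` {1..card W}"
    using assms spc by (simp add: SPC_orderings_def bij_betw_def)
  with that show ?thesis
    by blast
qed

lemma firm_prefers_pair:
  assumes "i \<in> {1..K}" "j \<in> {i..card W}" "j \<noteq> i"
  shows "uf (ordF i) (ordW j) < uf (ordF i) (ordW i)"
proof -
  have "ordW j \<noteq> ordW i"
    using assms ordW_eq_iff[of j i] by auto
  then show ?thesis
    using spc assms(1,2) unfolding SPC_orderings_def top_top_def by blast
qed

lemma worker_prefers_pair:
  assumes "i \<in> {1..K}" "j \<in> {i..card F}" "j \<noteq> i"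
  shows "uw (ordW i) (ordF j) < uw (ordW i) (ordF i)"
proof -
  have "ordF j \<noteq> ordF i"
    using assms ordF_eq_iff[of j i] by auto
  then show ?thesis
    using spc assms(1,2) unfolding SPC_orderings_def top_top_def by blast
qed

lemma worker_partner_order_ge:
  assumes "is_matching F W \<mu>" "matched_below r \<mu>" "r \<in> {1..card W}" "j \<in> {1..card F}"
    "\<mu> (ordW r) = Some (ordF j)"
  shows "r \<le> j"
proof (rule ccontr)
  assume "\<not> r \<le> j"
  then have "\<mu> (ordW j) = Some (ordF j)"
    using assms(2-4) by (auto simp: pairs_matched_below_def)
  with assms(1,5) have "ordW j = ordW r"
    unfolding is_matching_def by blast
  with \<open>\<not> r \<le> j\<close> show False
    using ordW_eq_iff assms(3,4) by auto
qed

lemma firm_partner_order_ge: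
  assumes "matched_below r \<mu>" "r \<in> {1..card F}" "j \<in> {1..card W}"
    "\<mu> (ordW j) = Some (ordF r)"
  shows "r \<le> j"
proof (rule ccontr)
  assume "\<not> r \<le> j"
  then have "\<mu> (ordW j) = Some (ordF j)"
    using assms(1-3) by (auto simp: pairs_matched_below_def)
  with assms(4) have "ordF j = ordF r"
    by simp
  with \<open>\<not> r \<le> j\<close> show False
    using ordF_eq_iff assms(2,3) by auto
qed

lemma truthful_order_respecting:
  assumes "j \<in> {1..K}"
  shows "order_respecting ordF j (worker_lists (ordW j))"
proof -
  have j: "j \<in> {1..card F}" "ordW j \<in> W"
    using assms ordW_in by auto
  have "h \<in> ordF ` {1..<j}"
    if h: "h \<in> F" "uw (ordW j) h > uw (ordW j) (ordF j)" for h
  proof -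
    obtain r where r: "r \<in> {1..card F}" "ordF r = h"
      using firm_order[OF h(1)] .
    have "\<not> j \<le> r"
      using worker_prefers_pair[OF assms, of r] h(2) r by fastforce
    with r show ?thesis
      by auto
  qed
  then show ?thesis
    unfolding order_respecting_def using j set_worker_lists worker_lists_index_less_iff ordF_in
    by auto
qed

lemma pair_firm_prefers_pair_worker:
  assumes m: "is_matching F W \<mu>" and below: "matched_below j \<mu>" and j: "j \<in> {1..K}"
    and u: "\<mu> u = Some (ordF j)" "u \<noteq> ordW j"
  shows "uf (ordF j) u < uf (ordF j) (ordW j)"
proof -
  obtain r where r: "r \<in> {1..card W}" "ordW r = u"
    using worker_order is_matchingD[OF m u(1)] by blast
  moreover have "j \<le> r"
    using firm_partner_order_ge[OF below, of r] r u j by auto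
  ultimately show ?thesis
    using firm_prefers_pair[OF j, of r] u(2) by auto
qed

lemma unmatched_pair_firm_futil_less:
  assumes m: "is_matching F W \<mu>" and below: "matched_below j \<mu>" and j: "j \<in> {1..K}"
    and unmatched: "\<mu> (ordW j) \<noteq> Some (ordF j)"
  shows "futil uf \<mu> (ordF j) < uf (ordF j) (ordW j)"
proof -
  have "uf (ordF j) u < uf (ordF j) (ordW j)" if "\<mu> u = Some (ordF j)" for u
    using pair_firm_prefers_pair_worker[OF m below j that] that unmatched by blast
  then show ?thesis
    using futil_less[OF m] uf_pos ordF_in ordW_in j by auto
qed

lemma matched_below_induct:
  assumes "\<And>j. j \<in> {1..K} \<Longrightarrow> j < k \<Longrightarrow> matched_below j \<mu> \<Longrightarrow> \<mu> (ordW j) = Some (ordF j)"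
  shows "matched_below k \<mu>"
proof -
  have "\<mu> (ordW j) = Some (ordF j)" if "j \<in> {1..<k}" "j \<le> K" for j
    using that
  proof (induction j rule: less_induct)
    case (less j)
    then have "matched_below j \<mu>"
      by (auto simp: pairs_matched_below_def)
    then show ?case
      using assms less.prems by auto
  qed
  then show ?thesis
    by (simp add: pairs_matched_below_def)
qed

text \<open>The pair of order j blocks unless it is matched: once the lower orders are matched, each of
  its members is the other's favourite among the partners left.\<close>
lemma list_stable_matches_pair:
  assumes \<nu>: "list_stable F W uf \<rho> \<nu>" and below: "matched_below j \<nu>" and j: "j \<in> {1..K}"
    and respecting: "order_respecting ordF j (\<rho> (ordW j))"
  shows "\<nu> (ordW j) = Some (ordF j)"
proof (rule ccontr)
  let ?f = "ordF j" and ?w = "ordW j" and ?L = "\<rho> (ordW j)"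
  assume unmatched: "\<nu> ?w \<noteq> Some ?f"
  have m: "is_matching F W \<nu>"
    using \<nu> by (simp add: list_stable_def)
  have resp: "?f \<in> set ?L" "\<forall>h\<in>set ?L. index ?L h < index ?L ?f \<longrightarrow> h \<in> ordF ` {1..<j}"
    using respecting by (auto simp: order_respecting_def)
  have fw: "?f \<in> F" "?w \<in> W"
    using j ordF_in ordW_in by auto
  have "index ?L ?f < index ?L g" if g: "\<nu> ?w = Some g" for g
  proof -
    have "g \<in> set ?L" "g \<noteq> ?f"
      using \<nu> g unmatched by (auto simp: list_stable_def)
    moreover have "g \<notin> ordF ` {1..<j}"
    proof
      assume "g \<in> ordF ` {1..<j}"
      then obtain i where "i \<in> {1..<j}" "g = ordF i"
        by blast
      then show False
        using worker_partner_order_ge[OF m below, of i] g j by auto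
    qed
    ultimately show ?thesis
      using resp index_eq_iff by (metis linorder_neqE_nat)
  qed
  then have "uf ?f ?w \<le> futil uf \<nu> ?f"
    using list_stable_no_blocking[OF \<nu> fw resp(1) unmatched] by blast
  with unmatched_pair_firm_futil_less[OF m below j unmatched] show False
    by simp
qed

lemma list_stable_matches_pairs:
  assumes "list_stable F W uf \<rho> \<nu>"
    and "\<forall>j\<in>{1..<k}. j \<le> K \<longrightarrow> order_respecting ordF j (\<rho> (ordW j))"
  shows "matched_below k \<nu>"
  using assms list_stable_matches_pair by (intro matched_below_induct) auto

lemma all_pairs_matched_unmatched:
  assumes "is_matching F W \<mu>" "matched_below (Suc K) \<mu>" "r \<in> {1..card W}" "K < r"
  shows "\<mu> (ordW r) = None"
proof (rule ccontr)
  assume "\<mu> (ordW r) \<noteq> None"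
  then obtain h where h: "\<mu> (ordW r) = Some h" "h \<in> F"
    using assms(1) by (auto simp: is_matching_def)
  then obtain j where j: "j \<in> {1..card F}" "ordF j = h"
    using firm_order by blast
  have "matched_below r \<mu>"
    using assms(2) by (auto simp: pairs_matched_below_def)
  then have "r \<le> j"
    using worker_partner_order_ge[OF assms(1) _ assms(3) j(1)] h(1) j(2) by simp
  then show False
    using j(1) assms(3,4) by simp
qed

lemma pairs_matched_unique:
  assumes "is_matching F W \<mu>1" "matched_below (Suc K) \<mu>1"
    and "is_matching F W \<mu>2" "matched_below (Suc K) \<mu>2"
  shows "\<mu>1 = \<mu>2"
proof
  fix w
  show "\<mu>1 w = \<mu>2 w"
  proof (cases "w \<in> W")
    case True
    then obtain r where r: "r \<in> {1..card W}" "ordW r = w"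
      using worker_order by blast
    show ?thesis
    proof (cases "r \<le> K")
      case True
      then show ?thesis
        using assms(2,4) r by (auto simp: pairs_matched_below_def)
    next
      case False
      then have "K < r"
        by (rule not_le_imp_less)
      then show ?thesis
        using all_pairs_matched_unmatched[OF assms(1,2) r(1)] all_pairs_matched_unmatched[OF assms(3,4) r(1)] r(2)
        by simp
    qed
  next
    case False
    then show ?thesis
      using is_matchingD[OF assms(1), of w] is_matchingD[OF assms(3), of w]
      by (cases "\<mu>1 w"; cases "\<mu>2 w") auto
  qed
qed

text \<open>A firm that keeps at least the utility of its pair partner must stay with it.\<close>
lemma firm_better_keeps_pairs:
  assumes m: "is_matching F W \<mu>" "is_matching F W \<mu>'" and pinned: "matched_below k \<mu>"
    and better: "\<forall>f\<in>F. futil uf \<mu> f \<le> futil uf \<mu>' f"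
  shows "matched_below k \<mu>'"
proof (rule matched_below_induct)
  fix j assume j: "j \<in> {1..K}" "j < k" and below: "matched_below j \<mu>'"
  have "futil uf \<mu> (ordF j) = uf (ordF j) (ordW j)"
    using pinned j futil_Some[OF m(1)] by (auto simp: pairs_matched_below_def)
  moreover have "futil uf \<mu> (ordF j) \<le> futil uf \<mu>' (ordF j)"
    using better ordF_in j(1) by auto
  ultimately show "\<mu>' (ordW j) = Some (ordF j)"
    using unmatched_pair_firm_futil_less[OF m(2) below j(1)] by fastforce
qed

lemma DA_truthful_matches_pairs: "matched_below (Suc K) (DA F W firm_lists worker_lists)"
  using DA_list_stable truthful_order_respecting by (intro list_stable_matches_pairs) auto

text \<open>Deviating from the truthful list cannot help w: the lower-order pairs are matched anyway,
  so w gets a firm of order at least her own, and truthfully she gets the best of these.\<close>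
theorem truthful_dominant:
  assumes w: "w \<in> W"
  shows "wutil uw w (DA F W firm_lists (worker_lists(w := L)) w) \<le> wutil uw w (DA F W firm_lists worker_lists w)"
proof -
  let ?\<nu> = "DA F W firm_lists (worker_lists(w := L))"
  obtain r where r: "r \<in> {1..card W}" "ordW r = w"
    using worker_order[OF w] .
  have below: "matched_below r ?\<nu>"
  proof (rule list_stable_matches_pairs[OF DA_list_stable], intro ballI impI)
    fix j assume "j \<in> {1..<r}" "j \<le> K"
    moreover from this have "ordW j \<noteq> w"
      using r ordW_eq_iff by auto
    ultimately show "order_respecting ordF j ((worker_lists(w := L)) (ordW j))"
      using truthful_order_respecting by simp
  qed
  show ?thesis
  proof (cases "?\<nu> w")
    case None
    then show ?thesis
      using wutil_matching_nonneg[OF DA_is_matching w] by (simp add: wutil_def)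
  next
    case (Some h)
    then have "h \<in> F"
      using is_matchingD[OF DA_is_matching Some] by simp
    then obtain j where j: "j \<in> {1..card F}" "ordF j = h"
      using firm_order by blast
    then have "r \<le> j"
      using worker_partner_order_ge[OF DA_is_matching below r(1)] Some r(2) by simp
    then have rK: "r \<in> {1..K}"
      using r j by auto
    then have "uw w h \<le> uw w (ordF r)"
      using worker_prefers_pair[OF rK, of j] \<open>r \<le> j\<close> j r(2) by (cases "j = r") auto
    moreover have "DA F W firm_lists worker_lists w = Some (ordF r)"
      using DA_truthful_matches_pairs rK r(2) by (auto simp: pairs_matched_below_def)
    ultimately show ?thesis
      using Some by (simp add: wutil_def)
  qed
qed

lemma pair_partner:
  assumes "is_matching F W \<mu>" "matched_below i \<mu>" "j \<in> {1..<i}" "j \<le> K" "\<mu> w = Some (ordF j)"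
  shows "w = ordW j"
  using assms unfolding pairs_matched_below_def is_matching_def by blast

text \<open>If worker r's report ranks only lower-order firms above her pair partner, the old outcome
  stays list-stable; firm-optimality of DA then keeps every pair up to r matched.\<close>
lemma DA_keeps_pair_if_order_respecting:
  assumes below: "matched_below (Suc r) (DA F W firm_lists \<rho>)" and r: "r \<in> {1..K}"
    and respecting: "order_respecting ordF r L"
  shows "DA F W firm_lists (\<rho>(ordW r := L)) (ordW r) = Some (ordF r)"
proof -
  let ?\<mu> = "DA F W firm_lists \<rho>" and ?\<rho>' = "\<rho>(ordW r := L)"
  have m: "is_matching F W ?\<mu>" and st: "list_stable F W uf \<rho> ?\<mu>"
    by (rule DA_is_matching, rule DA_list_stable)
  have \<mu>r: "?\<mu> (ordW r) = Some (ordF r)"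
    using below r by (auto simp: pairs_matched_below_def)
  have no_block: "uf y (ordW r) \<le> futil uf ?\<mu> y"
    if "y \<in> set L" "index L y < index L (ordF r)" for y
  proof -
    have "y \<in> ordF ` {1..<r}"
      using respecting that by (simp add: order_respecting_def)
    then obtain j where j: "j \<in> {1..<r}" "y = ordF j"
      by blast
    then have "?\<mu> (ordW j) = Some y" "j \<in> {1..K}"
      using below r by (auto simp: pairs_matched_below_def)
    then show ?thesis
      using firm_prefers_pair[of j r] futil_Some[OF m] j r by fastforce
  qed
  have "list_stable F W uf ?\<rho>' ?\<mu>"
    unfolding list_stable_def
  proof (intro conjI allI ballI impI m)
    fix u f assume "?\<mu> u = Some f"
    then show "f \<in> set (?\<rho>' u)"
      using st \<mu>r respecting by (auto simp: list_stable_def order_respecting_def)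
  next
    fix f u assume "f \<in> F" "u \<in> W" "?\<mu> u \<noteq> Some f" "f \<in> set (?\<rho>' u)"
      "\<forall>g. ?\<mu> u = Some g \<longrightarrow> index (?\<rho>' u) f < index (?\<rho>' u) g"
    then show "\<not> futil uf ?\<mu> f < uf f u"
      using st no_block[of f] \<mu>r by (cases "u = ordW r") (auto simp: list_stable_def not_less)
  qed
  then have "\<forall>f\<in>F. futil uf ?\<mu> f \<le> futil uf (DA F W firm_lists ?\<rho>') f"
    using DA_firm_optimal by blast
  then have "matched_below (Suc r) (DA F W firm_lists ?\<rho>')"
    using firm_better_keeps_pairs[OF m DA_is_matching below] by blast
  then show ?thesis
    using r by (auto simp: pairs_matched_below_def)
qed

lemma early_firms_never_propose:
  assumes below: "matched_below i (DA F W firm_lists \<rho>)" and "i \<le> K"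
    and r: "r \<in> {1..card W}" "i \<le> r" and y: "y \<in> ordF ` {1..<i}" and k: "k \<le> card F * card W + 1"
  shows "da_target firm_lists (da_rounds F firm_lists \<rho> k) y \<noteq> Some (ordW r)"
proof -
  obtain j where j: "j \<in> {1..<i}" "y = ordF j"
    using y by blast
  then have "DA F W firm_lists \<rho> (ordW j) = Some y" "j \<in> {1..K}"
    using below \<open>i \<le> K\<close> by (auto simp: pairs_matched_below_def)
  moreover have "uf y (ordW r) < uf y (ordW j)"
    using firm_prefers_pair[of j r] j r \<open>j \<in> {1..K}\<close> by auto
  ultimately show ?thesis
    using DA_no_proposal_below_partner ordW_in r k by blast
qed

lemma unmatched_pair_proposed:
  assumes below: "matched_below i (DA F W firm_lists \<rho>)" and i: "i \<in> {1..K}"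
    and unmatched: "DA F W firm_lists \<rho> (ordW i) \<noteq> Some (ordF i)"
  obtains k where "k \<le> card F * card W + 1" "da_target firm_lists (da_rounds F firm_lists \<rho> k) (ordF i) = Some (ordW i)"
proof -
  have "futil uf (DA F W firm_lists \<rho>) (ordF i) < uf (ordF i) (ordW i)"
    using unmatched_pair_firm_futil_less[OF DA_is_matching below i unmatched] .
  then have "(ordF i, ordW i) \<in> da_final F W firm_lists \<rho>"
    using DA_final_rejected ordF_in ordW_in i by auto
  then show ?thesis
    using that da_rejection_proposed by (metis less_imp_le)
qed

end

section \<open>Assortative markets\<close>

context market
begin

lemma worker_lists_find_best:
  assumes "w \<in> W" "P h" "h \<in> F"
  shows "uw w h \<le> wutil uw w (find P (worker_lists w))"
proof -
  obtain h' where h': "find P (worker_lists w) = Some h'"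
    "index (worker_lists w) h' \<le> index (worker_lists w) h"
    using assms set_worker_lists by (cases "find P (worker_lists w)") (auto simp: find_None_iff find_Some_iff_index)
  then have "h' \<in> F"
    using assms(1) set_worker_lists by (auto simp: find_Some_iff_index)
  then have "\<not> uw w h > uw w h'"
    using h'(2) worker_lists_index_less_iff[OF assms(1,3) \<open>h' \<in> F\<close>] by simp
  with h'(1) show ?thesis
    by (simp add: wutil_def)
qed

lemma wutil_find_le_worker_lists:
  assumes "w \<in> W" "\<And>h. P h \<Longrightarrow> h \<in> F"
  shows "wutil uw w (find P L) \<le> wutil uw w (find P (worker_lists w))"
proof -
  have found: "P h" if "find P xs = Some h" for xs h
    using that by (auto simp: find_Some_iff)
  show ?thesis
  proof (cases "find P L")
    case None
    have "wutil uw w (find P (worker_lists w)) \<ge> 0"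
      using found assms uw_pos by (cases "find P (worker_lists w)") (auto simp: wutil_def less_imp_le)
    with None show ?thesis
      by (simp add: wutil_def)
  next
    case (Some h)
    with found show ?thesis
      using worker_lists_find_best assms by (simp add: wutil_def)
  qed
qed

end

locale assortative_market = market F W uf uw
  for F :: "'f set" and W :: "'w set" and uf :: "'f \<Rightarrow> 'w \<Rightarrow> real" and uw :: "'w \<Rightarrow> 'f \<Rightarrow> real" +
  assumes common_ranking:
    "f1 \<in> F \<Longrightarrow> f2 \<in> F \<Longrightarrow> w1 \<in> W \<Longrightarrow> w2 \<in> W \<Longrightarrow> uf f1 w1 > uf f1 w2 \<longleftrightarrow> uf f2 w1 > uf f2 w2"
begin

definition above :: "'w \<Rightarrow> 'w \<Rightarrow> bool" where
  "above a b \<longleftrightarrow> (\<exists>f\<in>F. uf f a > uf f b)"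

definition available :: "('w \<Rightarrow> 'f option) \<Rightarrow> 'w \<Rightarrow> 'f \<Rightarrow> bool" where
  "available \<nu> u h \<longleftrightarrow> h \<in> F \<and> (\<forall>u'\<in>W. above u' u \<longrightarrow> \<nu> u' \<noteq> Some h)"

lemma above_iff: "a \<in> W \<Longrightarrow> b \<in> W \<Longrightarrow> f \<in> F \<Longrightarrow> above a b \<longleftrightarrow> uf f a > uf f b"
  using common_ranking unfolding above_def by blast

lemma above_irrefl: "\<not> above a a"
  by (simp add: above_def)

lemma above_trans: "a \<in> W \<Longrightarrow> b \<in> W \<Longrightarrow> c \<in> W \<Longrightarrow> above a b \<Longrightarrow> above b c \<Longrightarrow> above a c"
  unfolding above_def using above_iff by (meson less_trans)

text \<open>An available firm ranked above w's partner would block: it prefers w to anyone it could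
  hold, as all those are ranked below w.\<close>
lemma list_stable_partner_before_available:
  assumes \<nu>: "list_stable F W uf \<rho> \<nu>" and u: "u \<in> W"
    and y: "y \<in> set (\<rho> u)" "available \<nu> u y"
  obtains g where "\<nu> u = Some g" "index (\<rho> u) g \<le> index (\<rho> u) y"
proof -
  have m: "is_matching F W \<nu>"
    using \<nu> by (simp add: list_stable_def)
  have yF: "y \<in> F"
    using y(2) by (simp add: available_def)
  have "\<exists>g. \<nu> u = Some g \<and> index (\<rho> u) g \<le> index (\<rho> u) y"
  proof (rule ccontr)
    assume no_better: "\<nexists>g. \<nu> u = Some g \<and> index (\<rho> u) g \<le> index (\<rho> u) y"
    have "uf y u' < uf y u" if "\<nu> u' = Some y" for u'
    proof -
      have "u' \<in> W" "u' \<noteq> u"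
        using is_matchingD[OF m that] that no_better by auto
      moreover have "\<not> above u' u"
        using y(2) that \<open>u' \<in> W\<close> by (auto simp: available_def)
      ultimately show ?thesis
        using above_iff[OF _ u yF] uf_inj[OF yF] u unfolding inj_on_def by (metis not_less_iff_gr_or_eq)
    qed
    then have "futil uf \<nu> y < uf y u"
      using futil_less[OF m] uf_pos[OF yF u] by blast
    moreover have "uf y u \<le> futil uf \<nu> y"
      using list_stable_no_blocking[OF \<nu> yF u y(1)] no_better by (auto simp: not_le)
    ultimately show False
      by simp
  qed
  with that show ?thesis
    by blast
qed

lemma list_stable_serial_dictatorship:
  assumes \<nu>: "list_stable F W uf \<rho> \<nu>" and u: "u \<in> W"
  shows "\<nu> u = find (available \<nu> u) (\<rho> u)"
proof (cases "\<nu> u")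
  case None
  then show ?thesis
    using list_stable_partner_before_available[OF \<nu> u] by (metis find_None_iff2 option.distinct(1))
next
  case (Some h)
  have m: "is_matching F W \<nu>"
    using \<nu> by (simp add: list_stable_def)
  have "h \<in> set (\<rho> u)" "h \<in> F"
    using \<nu> is_matchingD[OF m Some] Some by (auto simp: list_stable_def)
  moreover have "available \<nu> u h"
    using Some \<open>h \<in> F\<close> m above_irrefl unfolding available_def is_matching_def by metis
  ultimately have "find (available \<nu> u) (\<rho> u) = Some h"
    using Some list_stable_partner_before_available[OF \<nu> u] by (auto simp: find_Some_iff_index)
  with Some show ?thesis
    by simp
qed

lemma list_stable_agree_above:
  assumes \<nu>1: "list_stable F W uf \<rho>1 \<nu>1" and \<nu>2: "list_stable F W uf \<rho>2 \<nu>2" and w: "w \<in> W"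
    and agree: "\<forall>u\<in>W. above u w \<longrightarrow> \<rho>1 u = \<rho>2 u"
  shows "u \<in> W \<Longrightarrow> above u w \<Longrightarrow> \<nu>1 u = \<nu>2 u"
proof (induction u rule: measure_induct_rule[of "\<lambda>u. card {u'\<in>W. above u' u}"])
  case (less u)
  have "\<nu>1 u' = \<nu>2 u'" if u': "u' \<in> W" "above u' u" for u'
  proof -
    have "{v\<in>W. above v u'} \<subset> {v\<in>W. above v u}"
      using above_trans[OF _ u'(1) less.prems(1) _ u'(2)] above_irrefl u' by blast
    then have "card {v\<in>W. above v u'} < card {v\<in>W. above v u}"
      using finite_W by (simp add: psubset_card_mono)
    moreover have "above u' w"
      using above_trans[OF u'(1) less.prems(1) w u'(2) less.prems(2)] .
    ultimately show ?thesis
      using less.IH u'(1) by blast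
  qed
  then have "available \<nu>1 u = available \<nu>2 u"
    unfolding available_def by auto
  moreover have "\<rho>1 u = \<rho>2 u"
    using agree less.prems by blast
  ultimately show ?case
    using list_stable_serial_dictatorship[OF \<nu>1 less.prems(1)] list_stable_serial_dictatorship[OF \<nu>2 less.prems(1)]
    by simp
qed

lemma DA_serial_dictatorship:
  assumes w: "w \<in> W"
  shows "available (DA F W firm_lists (\<rho>(w := L))) w = available (DA F W firm_lists (\<rho>(w := L'))) w"
    and "DA F W firm_lists (\<rho>(w := L)) w = find (available (DA F W firm_lists (\<rho>(w := L))) w) L"
proof -
  have "\<forall>u\<in>W. above u w \<longrightarrow> (\<rho>(w := L)) u = (\<rho>(w := L')) u"
    using above_irrefl by auto
  then have "\<forall>u\<in>W. above u w \<longrightarrow> DA F W firm_lists (\<rho>(w := L)) u = DA F W firm_lists (\<rho>(w := L')) u"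
    using list_stable_agree_above[OF DA_list_stable DA_list_stable w] by blast
  then show "available (DA F W firm_lists (\<rho>(w := L))) w = available (DA F W firm_lists (\<rho>(w := L'))) w"
    unfolding available_def by auto
  show "DA F W firm_lists (\<rho>(w := L)) w = find (available (DA F W firm_lists (\<rho>(w := L))) w) L"
    using list_stable_serial_dictatorship[OF DA_list_stable w] by simp
qed

theorem assortative_truthful_best:
  assumes w: "w \<in> W"
  shows "wutil uw w (DA F W firm_lists (\<rho>(w := L)) w) \<le> wutil uw w (DA F W firm_lists (\<rho>(w := worker_lists w)) w)"
proof -
  let ?A = "available (DA F W firm_lists (\<rho>(w := L))) w"
  have "DA F W firm_lists (\<rho>(w := worker_lists w)) w = find ?A (worker_lists w)"
    using DA_serial_dictatorship[OF w, of \<rho>] by metis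
  moreover have "DA F W firm_lists (\<rho>(w := L)) w = find ?A L"
    using DA_serial_dictatorship(2)[OF w] .
  moreover have "wutil uw w (find ?A L) \<le> wutil uw w (find ?A (worker_lists w))"
    by (rule wutil_find_le_worker_lists[OF w]) (simp add: available_def)
  ultimately show ?thesis
    by simp
qed

text \<open>A blocking firm would be available to its worker, and truthful reporting would get her it
  or better.\<close>
theorem DA_stable_if_no_gain_from_truth:
  assumes no_gain: "\<forall>w\<in>W. wutil uw w (DA F W firm_lists (\<rho>(w := worker_lists w)) w) \<le> wutil uw w (DA F W firm_lists \<rho> w)"
  shows "stable_matching F W uf uw (DA F W firm_lists \<rho>)"
proof -
  let ?\<mu> = "DA F W firm_lists \<rho>"
  have m: "is_matching F W ?\<mu>"
    by (rule DA_is_matching)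
  have "\<not> (uw w f > wutil uw w (?\<mu> w) \<and> uf f w > futil uf ?\<mu> f)" if f: "f \<in> F" and w: "w \<in> W" for f w
  proof
    assume block: "uw w f > wutil uw w (?\<mu> w) \<and> uf f w > futil uf ?\<mu> f"
    have "available ?\<mu> w f"
      unfolding available_def
    proof (intro conjI ballI impI f notI)
      fix u' assume "u' \<in> W" "above u' w" "?\<mu> u' = Some f"
      then show False
        using block futil_Some[OF m] above_iff[OF _ w f] by fastforce
    qed
    moreover have "available ?\<mu> w = available (DA F W firm_lists (\<rho>(w := worker_lists w))) w"
      using DA_serial_dictatorship(1)[OF w, of \<rho> "\<rho> w"] by simp
    ultimately have "uw w f \<le> wutil uw w (DA F W firm_lists (\<rho>(w := worker_lists w)) w)"
      using DA_serial_dictatorship(2)[OF w] worker_lists_find_best[OF w _ f] by metis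
    then show False
      using no_gain w block by fastforce
  qed
  moreover have "uf f w \<ge> 0 \<and> uw w f \<ge> 0" if "?\<mu> w = Some f" for w f
    using is_matchingD[OF m that] uf_pos uw_pos by (simp add: less_imp_le)
  ultimately show ?thesis
    unfolding stable_matching_def using m by blast
qed

end

section \<open>The Bayesian game\<close>

locale economy =
  fixes F :: "'f set" and W :: "'w set" and \<Theta> :: "'s set"
    and uf :: "'s \<Rightarrow> 'f \<Rightarrow> 'w \<Rightarrow> real" and uw :: "'w \<Rightarrow> 'f \<Rightarrow> real" and \<Psi> :: "'s \<Rightarrow> real"
  assumes finite_F: "finite F" and finite_W: "finite W" and finite_\<Theta>: "finite \<Theta>"
    and prior_pos: "\<theta> \<in> \<Theta> \<Longrightarrow> \<Psi> \<theta> > 0"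
    and uf_pos: "\<theta> \<in> \<Theta> \<Longrightarrow> f \<in> F \<Longrightarrow> w \<in> W \<Longrightarrow> uf \<theta> f w > 0"
    and uw_pos: "w \<in> W \<Longrightarrow> f \<in> F \<Longrightarrow> uw w f > 0"
    and uf_inj: "\<theta> \<in> \<Theta> \<Longrightarrow> f \<in> F \<Longrightarrow> inj_on (uf \<theta> f) W"
    and uw_inj: "w \<in> W \<Longrightarrow> inj_on (uw w) F"
begin

abbreviation truthful :: "'w \<Rightarrow> 'f list" where
  "truthful \<equiv> \<lambda>w. rank_list (uw w) F"

abbreviation outcome :: "'s \<Rightarrow> ('w \<Rightarrow> 'f list) \<Rightarrow> 'w \<Rightarrow> 'f option" where
  "outcome \<equiv> game_outcome F W uf"

abbreviation payoff :: "'s \<Rightarrow> ('w \<Rightarrow> 'f list) \<Rightarrow> 'w \<Rightarrow> real" where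
  "payoff \<theta> \<sigma> w \<equiv> wutil uw w (outcome \<theta> \<sigma> w)"

lemma market_at: "\<theta> \<in> \<Theta> \<Longrightarrow> market F W (uf \<theta>) uw"
  by unfold_locales (simp_all add: finite_F finite_W uf_inj uf_pos uw_inj uw_pos)

lemma valid_truthful: "w \<in> W \<Longrightarrow> valid_list F (truthful w)"
  by (simp add: valid_list_def distinct_rank_list set_rank_list finite_F uw_inj)

lemma expected_utility_mono:
  assumes "\<forall>\<theta>\<in>\<Theta>. payoff \<theta> \<sigma>1 w \<le> payoff \<theta> \<sigma>2 w"
  shows "expected_utility F W uf uw \<Theta> \<Psi> \<sigma>1 w \<le> expected_utility F W uf uw \<Theta> \<Psi> \<sigma>2 w"
  unfolding expected_utility_def
  using assms prior_pos by (intro sum_mono) (simp add: mult_left_mono less_imp_le)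

lemma expected_utility_strict_mono:
  assumes "\<forall>\<theta>\<in>\<Theta>. payoff \<theta> \<sigma>1 w \<le> payoff \<theta> \<sigma>2 w" "\<theta>0 \<in> \<Theta>" "payoff \<theta>0 \<sigma>1 w < payoff \<theta>0 \<sigma>2 w"
  shows "expected_utility F W uf uw \<Theta> \<Psi> \<sigma>1 w < expected_utility F W uf uw \<Theta> \<Psi> \<sigma>2 w"
  unfolding expected_utility_def
proof (rule sum_strict_mono_ex1[OF finite_\<Theta>])
  show "\<forall>\<theta>\<in>\<Theta>. \<Psi> \<theta> * payoff \<theta> \<sigma>1 w \<le> \<Psi> \<theta> * payoff \<theta> \<sigma>2 w"
    using assms(1) prior_pos by (simp add: mult_left_mono less_imp_le)
  show "\<exists>\<theta>\<in>\<Theta>. \<Psi> \<theta> * payoff \<theta> \<sigma>1 w < \<Psi> \<theta> * payoff \<theta> \<sigma>2 w"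
    using assms(2,3) prior_pos by auto
qed

text \<open>Full support of the prior turns a gain in one state into a gain in expectation.\<close>
lemma BNE_no_dominating_deviation:
  assumes "is_BNE F W uf uw \<Theta> \<Psi> \<sigma>" "w \<in> W" "valid_list F L"
    and "\<forall>\<theta>\<in>\<Theta>. payoff \<theta> \<sigma> w \<le> payoff \<theta> (\<sigma>(w := L)) w" "\<theta> \<in> \<Theta>"
  shows "payoff \<theta> (\<sigma>(w := L)) w = payoff \<theta> \<sigma> w"
proof (rule ccontr)
  assume "payoff \<theta> (\<sigma>(w := L)) w \<noteq> payoff \<theta> \<sigma> w"
  with assms(4,5) have "payoff \<theta> \<sigma> w < payoff \<theta> (\<sigma>(w := L)) w"
    by force
  then have "expected_utility F W uf uw \<Theta> \<Psi> \<sigma> w < expected_utility F W uf uw \<Theta> \<Psi> (\<sigma>(w := L)) w"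
    using expected_utility_strict_mono assms(4,5) by blast
  with assms(1-3) show False
    unfolding is_BNE_def by (meson not_le)
qed

lemma truthful_BNE_if_dominant:
  assumes "\<And>\<theta> w L. \<theta> \<in> \<Theta> \<Longrightarrow> w \<in> W \<Longrightarrow> payoff \<theta> (truthful(w := L)) w \<le> payoff \<theta> truthful w"
  shows "is_BNE F W uf uw \<Theta> \<Psi> truthful"
  unfolding is_BNE_def using assms valid_truthful expected_utility_mono by blast

lemma assortative_market_at:
  assumes "assortative_firms F W uf \<Theta>" "\<theta> \<in> \<Theta>"
  shows "assortative_market F W (uf \<theta>) uw"
  using assms market_at unfolding assortative_market_def assortative_market_axioms_def assortative_firms_def
  by blast

theorem assortative_equilibria:
  assumes assortative: "assortative_firms F W uf \<Theta>"
  shows "is_BNE F W uf uw \<Theta> \<Psi> truthful"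
    and "is_BNE F W uf uw \<Theta> \<Psi> \<sigma> \<Longrightarrow> \<theta> \<in> \<Theta> \<Longrightarrow> stable_matching F W (uf \<theta>) uw (outcome \<theta> \<sigma>)"
proof -
  have truth_best: "payoff \<theta> (\<rho>(w := L)) w \<le> payoff \<theta> (\<rho>(w := truthful w)) w"
    if "\<theta> \<in> \<Theta>" "w \<in> W" for \<theta> \<rho> w L
    using assortative_market.assortative_truthful_best[OF assortative_market_at[OF assortative that(1)] that(2)]
    by (simp add: game_outcome_def)
  show "is_BNE F W uf uw \<Theta> \<Psi> truthful"
  proof (rule truthful_BNE_if_dominant)
    fix \<theta> w L assume "\<theta> \<in> \<Theta>" "w \<in> W"
    moreover have "truthful(w := truthful w) = truthful"
      by (rule ext) simp
    ultimately show "payoff \<theta> (truthful(w := L)) w \<le> payoff \<theta> truthful w"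
      using truth_best[of \<theta> w truthful L] by simp
  qed
  assume bne: "is_BNE F W uf uw \<Theta> \<Psi> \<sigma>" and \<theta>: "\<theta> \<in> \<Theta>"
  have "payoff \<theta> (\<sigma>(w := truthful w)) w = payoff \<theta> \<sigma> w" if w: "w \<in> W" for w
    using truth_best[of _ w \<sigma> "\<sigma> w"] w \<theta>
    by (intro BNE_no_dominating_deviation[OF bne w valid_truthful[OF w]]) simp_all
  then show "stable_matching F W (uf \<theta>) uw (outcome \<theta> \<sigma>)"
    using assortative_market.DA_stable_if_no_gain_from_truth[OF assortative_market_at[OF assortative \<theta>]]
    by (simp add: game_outcome_def)
qed

end

locale spc_star_economy = economy F W \<Theta> uf uw \<Psi>
  for F :: "'f set" and W :: "'w set" and \<Theta> :: "'s set"
    and uf :: "'s \<Rightarrow> 'f \<Rightarrow> 'w \<Rightarrow> real" and uw :: "'w \<Rightarrow> 'f \<Rightarrow> real" and \<Psi> :: "'s \<Rightarrow> real" +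
  fixes oF :: "'s \<Rightarrow> nat \<Rightarrow> 'f" and oW :: "'s \<Rightarrow> nat \<Rightarrow> 'w"
  assumes spc_at: "\<theta> \<in> \<Theta> \<Longrightarrow> SPC_orderings F W (uf \<theta>) uw (oF \<theta>) (oW \<theta>)"
    and star: "\<theta> \<in> \<Theta> \<Longrightarrow> i \<in> {1..min (card F) (card W)} \<Longrightarrow> f \<in> F \<Longrightarrow>
      uw (oW \<theta> i) f > uw (oW \<theta> i) (oF \<theta> i) \<Longrightarrow> \<theta>' \<in> \<Theta> \<Longrightarrow> \<exists>i'\<in>{1..<i}. f = oF \<theta>' i'"
begin

lemma spc_market_at: "\<theta> \<in> \<Theta> \<Longrightarrow> spc_market F W (uf \<theta>) uw (oF \<theta>) (oW \<theta>)"
  using market_at spc_at unfolding spc_market_def spc_market_axioms_def by blast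

text \<open>L is the deviation of the inductive step: w puts the firms she prefers to f, then f, on top
  of her list.\<close>
context
  fixes \<sigma> \<theta> i w f TB L
  assumes \<theta>: "\<theta> \<in> \<Theta>" and i: "i \<in> {1..min (card F) (card W)}"
    and below: "\<forall>s\<in>\<Theta>. pairs_matched_below F W (oF s) (oW s) i (outcome s \<sigma>)"
    and w_def: "w = oW \<theta> i" and f_def: "f = oF \<theta> i"
    and TB_def: "TB = rank_list (uw w) {h\<in>F. uw w h > uw w f}"
    and L_def: "L = dev_list TB f (\<sigma> w)"
begin

interpretation \<theta>: spc_market F W "uf \<theta>" uw "oF \<theta>" "oW \<theta>"
  by (rule spc_market_at[OF \<theta>])

lemma w_in: "w \<in> W" and f_in: "f \<in> F"
  using i \<theta>.ordW_in \<theta>.ordF_in by (auto simp: w_def f_def)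

lemma set_TB: "set TB = {h\<in>F. uw w h > uw w f}"
  unfolding TB_def using finite_F uw_inj[OF w_in] by (intro set_rank_list) (auto intro: inj_on_subset)

lemma f_notin_TB: "f \<notin> set TB"
  by (simp add: set_TB)

lemma TB_early: "s \<in> \<Theta> \<Longrightarrow> set TB \<subseteq> oF s ` {1..<i}"
  using star[OF \<theta> i] set_TB by (auto simp: w_def f_def)

lemma valid_deviation: "valid_list F L" if "valid_list F (\<sigma> w)"
  using that f_in set_TB distinct_rank_list[OF finite_subset[OF _ finite_F], of _ "uw w"] uw_inj[OF w_in]
  unfolding valid_list_def L_def dev_list_def TB_def by (auto intro: inj_on_subset)

text \<open>SPC* for w in state s: f is not of order below r in \<theta>, so w does not prefer f to her
  pair partner in s.\<close>
lemma lower_order_pair_in_head: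
  assumes s: "s \<in> \<Theta>" and r: "r \<in> {1..min (card F) (card W)}" "oW s r = w" "r < i"
  shows "oF s r \<in> set TB \<or> oF s r = f"
proof (rule ccontr)
  interpret s: spc_market F W "uf s" uw "oF s" "oW s"
    by (rule spc_market_at[OF s])
  assume out: "\<not> (oF s r \<in> set TB \<or> oF s r = f)"
  then have "\<not> uw w (oF s r) > uw w f" "uw w (oF s r) \<noteq> uw w f"
    using s.ordF_in r(1) set_TB uw_inj[OF w_in] f_in unfolding inj_on_def by auto
  then have "uw (oW s r) f > uw (oW s r) (oF s r)"
    using r(2) by simp
  then obtain i' where "i' \<in> {1..<r}" "f = oF \<theta> i'"
    using star[OF s r(1) f_in _ \<theta>] by blast
  then show False
    using \<theta>.ordF_eq_iff[of i' i] i r(3) by (auto simp: f_def)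
qed

lemma lower_order_deviation_respecting:
  assumes s: "s \<in> \<Theta>" and r: "r \<in> {1..min (card F) (card W)}" "oW s r = w" "r < i"
  shows "order_respecting (oF s) r L"
proof -
  let ?g = "oF s r"
  note g_head = lower_order_pair_in_head[OF assms]
  have "y \<in> oF s ` {1..<r}"
    if "y \<in> set L" "index L y < index L ?g" for y
  proof -
    have y: "y \<in> set TB" "?g \<in> set TB \<Longrightarrow> index TB y < index TB ?g"
      using index_dev_list_less_head[OF f_notin_TB g_head] that by (auto simp: L_def)
    have "uw w y > uw w ?g"
    proof (cases "?g \<in> set TB")
      case True
      then show ?thesis
        using y index_rank_list_less_iff[of "{h\<in>F. uw w h > uw w f}" "uw w" y ?g] finite_F uw_inj[OF w_in]
        unfolding TB_def by (auto simp: set_TB[unfolded TB_def] intro: inj_on_subset)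
    next
      case False
      then show ?thesis
        using y(1) g_head set_TB by auto
    qed
    then show ?thesis
      using star[OF s r(1) _ _ s] y(1) set_TB r(2) by fastforce
  qed
  then show ?thesis
    using g_head by (auto simp: order_respecting_def L_def set_dev_list)
qed

lemma deviation_same_if_lower_order:
  assumes s: "s \<in> \<Theta>" and r: "r \<in> {1..card W}" "oW s r = w" "r < i"
  shows "outcome s (\<sigma>(w := L)) w = outcome s \<sigma> w"
proof -
  interpret s: spc_market F W "uf s" uw "oF s" "oW s"
    by (rule spc_market_at[OF s])
  have rK: "r \<in> {1..s.K}"
    using r i by auto
  have below_r: "s.matched_below (Suc r) (DA F W s.firm_lists \<sigma>)"
    using below s r(3) by (auto simp: pairs_matched_below_def game_outcome_def)
  then have "DA F W s.firm_lists \<sigma> w = Some (oF s r)"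
    using rK r(2) by (auto simp: pairs_matched_below_def)
  then show ?thesis
    using s.DA_keeps_pair_if_order_respecting[OF below_r rK lower_order_deviation_respecting[OF s rK r(2,3)]] r(2)
    by (simp add: game_outcome_def)
qed

lemma payoff_below_head_if_higher_order:
  assumes s: "s \<in> \<Theta>" and r: "r \<in> {1..card W}" "oW s r = w" "i \<le> r"
  shows "payoff s \<sigma> w \<le> uw w f"
    and "outcome s \<sigma> w \<noteq> Some f \<Longrightarrow> payoff s \<sigma> w < uw w f"
proof -
  interpret s: spc_market F W "uf s" uw "oF s" "oW s"
    by (rule spc_market_at[OF s])
  have "payoff s \<sigma> w \<le> uw w f \<and> (outcome s \<sigma> w \<noteq> Some f \<longrightarrow> payoff s \<sigma> w < uw w f)"
  proof (cases "outcome s \<sigma> w")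
    case None
    then show ?thesis
      using uw_pos[OF w_in f_in] by (simp add: wutil_def)
  next
    case (Some x)
    have xF: "x \<in> F"
      using is_matchingD[OF DA_is_matching Some[unfolded game_outcome_def]] by simp
    have "x \<notin> set TB"
    proof
      assume "x \<in> set TB"
      then obtain j where j: "j \<in> {1..<i}" "x = oF s j"
        using TB_early[OF s] by blast
      then have "w = oW s j"
        using s.pair_partner[OF DA_is_matching] below s i Some by (auto simp: game_outcome_def)
      then show False
        using s.ordW_eq_iff[of r j] r j i by auto
    qed
    then have "uw w x \<le> uw w f" "x \<noteq> f \<Longrightarrow> uw w x \<noteq> uw w f"
      using set_TB xF f_in uw_inj[OF w_in] unfolding inj_on_def by auto
    with Some show ?thesis
      by (auto simp: wutil_def)
  qed
  then show "payoff s \<sigma> w \<le> uw w f" "outcome s \<sigma> w \<noteq> Some f \<Longrightarrow> payoff s \<sigma> w < uw w f"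
    by auto
qed

text \<open>In a state where w has order at least i, no firm of TB ever proposes to her, since each of
  them ends with a partner of order below i that it prefers to w.\<close>
lemma deviation_cases_if_higher_order:
  assumes s: "s \<in> \<Theta>" and r: "r \<in> {1..card W}" "oW s r = w" "i \<le> r"
  shows "outcome s (\<sigma>(w := L)) = outcome s \<sigma> \<or> uw w f \<le> payoff s (\<sigma>(w := L)) w"
    and "k \<le> card F * card W + 1 \<Longrightarrow>
      da_target (\<lambda>f. rank_list (uf s f) W) (da_rounds F (\<lambda>f. rank_list (uf s f) W) \<sigma> k) f = Some w \<Longrightarrow>
      uw w f \<le> payoff s (\<sigma>(w := L)) w"
proof -
  interpret s: spc_market F W "uf s" uw "oF s" "oW s"
    by (rule spc_market_at[OF s])
  have silent: "\<forall>k\<le>card F * card W + 1. \<forall>y\<in>set TB. da_target s.firm_lists (da_rounds F s.firm_lists \<sigma> k) y \<noteq> Some w"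
    using s.early_firms_never_propose[of i \<sigma> r] below s i r TB_early[OF s]
    by (auto simp: game_outcome_def)
  have head: "uw w f \<le> payoff s (\<sigma>(w := L)) w"
    if proposes: "k \<le> card F * card W + 1" "da_target s.firm_lists (da_rounds F s.firm_lists \<sigma> k) f = Some w" for k
  proof -
    obtain h where h: "outcome s (\<sigma>(w := L)) w = Some h" "h \<in> set TB \<or> h = f"
      using DA_dev_gets_head[OF f_in f_notin_TB w_in silent proposes] by (auto simp: game_outcome_def L_def)
    from h(2) have "uw w f \<le> uw w h"
      using set_TB by (cases "h = f") auto
    with h(1) show ?thesis
      by (simp add: wutil_def)
  qed
  then show "k \<le> card F * card W + 1 \<Longrightarrow>
      da_target s.firm_lists (da_rounds F s.firm_lists \<sigma> k) f = Some w \<Longrightarrow>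
      uw w f \<le> payoff s (\<sigma>(w := L)) w"
    by blast
  show "outcome s (\<sigma>(w := L)) = outcome s \<sigma> \<or> uw w f \<le> payoff s (\<sigma>(w := L)) w"
  proof (cases "\<exists>k\<le>card F * card W + 1. da_target s.firm_lists (da_rounds F s.firm_lists \<sigma> k) f = Some w")
    case True
    then show ?thesis
      using head by blast
  next
    case False
    then have "DA F W s.firm_lists (\<sigma>(w := L)) = DA F W s.firm_lists \<sigma>"
      using silent unfolding L_def by (intro DA_dev_unchanged) auto
    then show ?thesis
      by (simp add: game_outcome_def)
  qed
qed

text \<open>If the pair of order i were unmatched in state \<theta>, the deviation L would be weakly
  better for w in every state and strictly better in \<theta>.\<close>
lemma BNE_pair_step:
  assumes bne: "is_BNE F W uf uw \<Theta> \<Psi> \<sigma>"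
  shows "outcome \<theta> \<sigma> w = Some f"
proof (rule ccontr)
  assume unmatched: "outcome \<theta> \<sigma> w \<noteq> Some f"
  have iW: "i \<in> {1..card W}"
    using i by auto
  have weak: "\<forall>s\<in>\<Theta>. payoff s \<sigma> w \<le> payoff s (\<sigma>(w := L)) w"
  proof
    fix s assume s: "s \<in> \<Theta>"
    then interpret s: spc_market F W "uf s" uw "oF s" "oW s"
      by (rule spc_market_at)
    obtain r where r: "r \<in> {1..card W}" "oW s r = w"
      using s.worker_order[OF w_in] .
    show "payoff s \<sigma> w \<le> payoff s (\<sigma>(w := L)) w"
    proof (cases "r < i")
      case True
      then show ?thesis
        using deviation_same_if_lower_order[OF s r] by simp
    next
      case False
      then have "i \<le> r"
        by simp
      then show ?thesis
        using deviation_cases_if_higher_order(1)[OF s r] payoff_below_head_if_higher_order(1)[OF s r] by auto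
    qed
  qed
  obtain k where "k \<le> card F * card W + 1"
      "da_target \<theta>.firm_lists (da_rounds F \<theta>.firm_lists \<sigma> k) f = Some w"
    using \<theta>.unmatched_pair_proposed[of i \<sigma>] below \<theta> i unmatched by (auto simp: w_def f_def game_outcome_def)
  then have "payoff \<theta> \<sigma> w < payoff \<theta> (\<sigma>(w := L)) w"
    using deviation_cases_if_higher_order(2)[OF \<theta> iW w_def[symmetric] order_refl]
      payoff_below_head_if_higher_order(2)[OF \<theta> iW w_def[symmetric] order_refl unmatched]
    by fastforce
  moreover have "payoff \<theta> (\<sigma>(w := L)) w = payoff \<theta> \<sigma> w"
    using bne w_in valid_deviation \<theta> weak by (intro BNE_no_dominating_deviation) (auto simp: is_BNE_def)
  ultimately show False
    by simp
qed

end

theorem BNE_matches_pairs: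
  assumes bne: "is_BNE F W uf uw \<Theta> \<Psi> \<sigma>" and \<theta>: "\<theta> \<in> \<Theta>"
  shows "pairs_matched_below F W (oF \<theta>) (oW \<theta>) (Suc (min (card F) (card W))) (outcome \<theta> \<sigma>)"
proof -
  have "\<forall>s\<in>\<Theta>. pairs_matched_below F W (oF s) (oW s) i (outcome s \<sigma>)" for i
  proof (induction i)
    case 0
    then show ?case
      by (simp add: pairs_matched_below_def)
  next
    case (Suc i)
    have "outcome s \<sigma> (oW s i) = Some (oF s i)" if "s \<in> \<Theta>" "i \<in> {1..min (card F) (card W)}" for s
      using BNE_pair_step[OF that Suc.IH refl refl refl refl bne] .
    with Suc.IH show ?case
      by (auto simp: pairs_matched_below_def less_Suc_eq)
  qed
  with \<theta> show ?thesis
    by blast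
qed

theorem spc_star_equilibria:
  shows "is_BNE F W uf uw \<Theta> \<Psi> truthful"
    and "is_BNE F W uf uw \<Theta> \<Psi> \<sigma> \<Longrightarrow> \<theta> \<in> \<Theta> \<Longrightarrow> stable_matching F W (uf \<theta>) uw \<nu> \<Longrightarrow> outcome \<theta> \<sigma> = \<nu>"
proof -
  show "is_BNE F W uf uw \<Theta> \<Psi> truthful"
    using spc_market.truthful_dominant[OF spc_market_at]
    by (intro truthful_BNE_if_dominant) (simp add: game_outcome_def)
  assume bne: "is_BNE F W uf uw \<Theta> \<Psi> \<sigma>" and \<theta>: "\<theta> \<in> \<Theta>" and st: "stable_matching F W (uf \<theta>) uw \<nu>"
  interpret \<theta>: spc_market F W "uf \<theta>" uw "oF \<theta>" "oW \<theta>"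
    by (rule spc_market_at[OF \<theta>])
  have "\<theta>.matched_below (Suc \<theta>.K) \<nu>"
    using \<theta>.stable_imp_list_stable[OF st] \<theta>.truthful_order_respecting
    by (intro \<theta>.list_stable_matches_pairs) auto
  moreover have "is_matching F W \<nu>"
    using st by (simp add: stable_matching_def)
  ultimately show "outcome \<theta> \<sigma> = \<nu>"
    using \<theta>.pairs_matched_unique[OF DA_is_matching BNE_matches_pairs[OF bne \<theta>, unfolded game_outcome_def]]
    by (simp add: game_outcome_def)
qed

end

theorem proposition1:
  fixes F :: "'f set" and W :: "'w set" and \<Theta> :: "'s set"
    and uf :: "'s \<Rightarrow> 'f \<Rightarrow> 'w \<Rightarrow> real" and uw :: "'w \<Rightarrow> 'f \<Rightarrow> real"
    and \<Psi> :: "'s \<Rightarrow> real"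
  assumes finF: "finite F" and finW: "finite W"
    and fin\<Theta>: "finite \<Theta>" and ne\<Theta>: "\<Theta> \<noteq> {}"
    and prior_pos: "\<forall>\<theta>\<in>\<Theta>. \<Psi> \<theta> > 0" and prior_sum: "(\<Sum>\<theta>\<in>\<Theta>. \<Psi> \<theta>) = 1"
    and uf_pos: "\<forall>\<theta>\<in>\<Theta>. \<forall>f\<in>F. \<forall>w\<in>W. uf \<theta> f w > 0"
    and uw_pos: "\<forall>w\<in>W. \<forall>f\<in>F. uw w f > 0"
    and uf_strict: "\<forall>\<theta>\<in>\<Theta>. \<forall>f\<in>F. inj_on (uf \<theta> f) W"
    and uw_strict: "\<forall>w\<in>W. inj_on (uw w) F"
    and unique_stable: "\<forall>\<theta>\<in>\<Theta>. \<exists>!\<mu>. stable_matching F W (uf \<theta>) uw \<mu>"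
    and cond: "assortative_firms F W uf \<Theta> \<or> SPC_star F W uf uw \<Theta>"
  shows "(\<exists>\<sigma>. is_BNE F W uf uw \<Theta> \<Psi> \<sigma>) \<and>
         (\<forall>\<sigma>. is_BNE F W uf uw \<Theta> \<Psi> \<sigma> \<longrightarrow>
            (\<forall>\<theta>\<in>\<Theta>. game_outcome F W uf \<theta> \<sigma> = (THE \<mu>. stable_matching F W (uf \<theta>) uw \<mu>)))"
proof -
  interpret economy F W \<Theta> uf uw \<Psi>
    using assms by unfold_locales simp_all
  have stable_THE: "stable_matching F W (uf \<theta>) uw (THE \<mu>. stable_matching F W (uf \<theta>) uw \<mu>)"
    if "\<theta> \<in> \<Theta>" for \<theta>
    using theI'[OF unique_stable[rule_format, OF that]] .
  have THE_stable: "(THE \<mu>. stable_matching F W (uf \<theta>) uw \<mu>) = \<mu>"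
    if "\<theta> \<in> \<Theta>" "stable_matching F W (uf \<theta>) uw \<mu>" for \<theta> \<mu>
    using unique_stable that by (simp add: the1_equality)
  from cond show ?thesis
  proof
    assume "assortative_firms F W uf \<Theta>"
    then show ?thesis
      using assortative_equilibria THE_stable by metis
  next
    assume "SPC_star F W uf uw \<Theta>"
    then obtain oF oW where "spc_star_economy F W \<Theta> uf uw \<Psi> oF oW"
      unfolding SPC_star_def spc_star_economy_def spc_star_economy_axioms_def
      using economy_axioms by blast
    then show ?thesis
      using spc_star_economy.spc_star_equilibria stable_THE by metis
  qed
qed

end
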